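(* Let $\mathcal{P}$ be an $n$-dimensional convex polytope in $\mathbb{R}^n$ and let $\mathbf{s}\in\mathbb{R}^n$, $\mathbf{s}\neq\mathbf{0}$. For $\lambda>0$ let $$\varphi_{\mathcal{P},\mathbf{s}}(\lambda)=\int_{\mathcal{P}} e^{-i\frac{1}{\lambda}\mathbf{s}\cdot\mathbf{x}}\,d\mathbf{x}.$$ Then, as $\lambda\to 0^+$, $$\varphi_{\mathcal{P},\mathbf{s}}(\lambda)=\frac{i}{\|\mathbf{s}\|}\left(\sum_{F\in\mathcal{F}_{\mathcal{P}}:\ \mathbf{s}\perp F}\operatorname{sgn}_{\mathcal{P}}(F,\mathbf{s})\, A_F\, e^{-i\frac{1}{\lambda}\mathbf{s}\cdot\mathbf{p}_F}\right)\lambda+O(\lambda^2),$$ where the sum is empty (equal to $0$) if $\mathbf{s}$ is orthogonal to no facet of $\mathcal{P}$.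
   Context: $\mathbf{s}\cdot\mathbf{x}$ is the standard scalar product on $\mathbb{R}^n$ and $\|\cdot\|$ the Euclidean norm. $\mathcal{F}_{\mathcal{P}}$ is the set of facets ($(n-1)$-dimensional faces) of $\mathcal{P}$. For a facet $F$, $\mathbf{s}\perp F$ means $\mathbf{s}$ is orthogonal to $F$ (i.e. to the hyperplane containing $F$); $A_F>0$ is the $(n-1)$-dimensional surface measure of $F$; $\mathbf{p}_F$ is an arbitrary point of the affine hyperplane containing $F$ (when $\mathbf{s}\perp F$ the value $\mathbf{s}\cdot\mathbf{p}_F$ does not depend on this choice). For $\mathbf{s}\perp F$, $\operatorname{sgn}_{\mathcal{P}}(F,\mathbf{s})=1$ if $\mathbf{s}$ is directed to the outside of $\mathcal{P}$ (i.e. is a positive multiple of the outward normal of $F$) and $-1$ otherwise. *)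

theory Defs
  imports "HOL-Analysis.Analysis" "HOL-Library.Landau_Symbols"
begin

definition orth_to :: "'a::euclidean_space \<Rightarrow> 'a set \<Rightarrow> bool" where
  "orth_to s F \<longleftrightarrow> (\<forall>x\<in>F. \<forall>y\<in>F. s \<bullet> (x - y) = 0)"

definition facet_point :: "'a::euclidean_space set \<Rightarrow> 'a" where
  "facet_point F = (SOME p. p \<in> F)"

text \<open>(n-1)-dimensional surface measure of a flat set F with unit normal u:
  the n-dimensional volume of the right prism of height 1 over F.\<close>
definition facet_area :: "'a::euclidean_space \<Rightarrow> 'a set \<Rightarrow> real" where
  "facet_area u F = measure lebesgue {x + t *\<^sub>R u | x t. x \<in> F \<and> t \<in> {0..1}}"

text \<open>sgn_P(F,s): 1 if s points to the outside of P (P lies in the halfspace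
  s.x <= s.p_F), -1 otherwise.\<close>
definition facet_sgn :: "'a::euclidean_space set \<Rightarrow> 'a set \<Rightarrow> 'a \<Rightarrow> real" where
  "facet_sgn P F s = (if \<forall>x\<in>P. s \<bullet> x \<le> s \<bullet> facet_point F then 1 else -1)"

definition phi :: "'a::euclidean_space set \<Rightarrow> 'a \<Rightarrow> real \<Rightarrow> complex" where
  "phi P s l = integral P (\<lambda>x. exp (- \<i> * complex_of_real ((1 / l) * (s \<bullet> x))))"

end

theory Submission
  imports Defs
begin

text \<open>Put \<open>u = s / \<parallel>s\<parallel>\<close> and \<open>\<omega> = \<parallel>s\<parallel> / \<lambda>\<close>, so that \<open>\<phi>(\<lambda>)\<close> is the integral of
  \<open>exp (-i \<omega> u \<bullet> z)\<close> over \<open>P\<close>. Integrate first along the lines \<open>x + \<real>u\<close>, parametrised by the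
  points \<open>x\<close> of the slab \<open>|u \<bullet> x| \<le> 1/2\<close>, which each such line crosses in a segment of length one;
  this avoids projecting onto the hyperplane orthogonal to \<open>u\<close>. On a line meeting \<open>P\<close> the inner
  integral is \<open>(i/\<omega>) (exp (-i \<omega> \<beta>\<^sub>+) - exp (-i \<omega> \<beta>\<^sub>-))\<close>, where \<open>\<beta>\<^sub>+(x)\<close> and \<open>\<beta>\<^sub>-(x)\<close>
  are the heights at which the line leaves and enters \<open>P\<close>.

  For a polytope, \<open>\<beta>\<^sub>+\<close> is the minimum of finitely many affine functions and is bounded by
  \<open>max\<^sub>P u \<bullet> z\<close>. Where it attains this bound it is constant, and that region has the area of the top
  face of \<open>P\<close>, which vanishes unless the top face is a facet. On each remaining cell it is a non-constant
  affine function on a convex set, and such oscillatory integrals are \<open>O(1/\<omega>)\<close>: translating by half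
  a period flips the sign of the integrand, while moving a convex body with nonempty interior
  changes it only by a volume \<open>O(1/\<omega>)\<close>. The same holds for \<open>\<beta>\<^sub>-\<close> and the bottom face, and the
  facets orthogonal to \<open>s\<close> are precisely those of the top and bottom faces that are facets.\<close>

section \<open>Integration along parallel lines\<close>

definition slab :: "'a::euclidean_space \<Rightarrow> 'a set" where
  "slab u = {x. \<bar>u \<bullet> x\<bar> \<le> 1/2}"

lemma closed_slab: "closed (slab u)"
  unfolding slab_def by (intro closed_Collect_le continuous_intros)

lemma slab_borel [measurable]: "slab u \<in> sets borel"
  by (simp add: closed_slab borel_closed)

lemma convex_slab: "convex (slab u)"
proof -
  have "slab u = {x. u \<bullet> x \<le> 1/2} \<inter> {x. (- u) \<bullet> x \<le> 1/2}"
    by (auto simp: slab_def abs_le_iff)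
  then show ?thesis
    by (metis convex_Int convex_halfspace_le)
qed

lemma slab_uminus [simp]: "slab (- u) = slab u"
  by (simp add: slab_def)

lemma indicator_slab_line:
  assumes "norm u = 1"
  shows "indicator (slab u) (z - t *\<^sub>R u) = (indicator {u \<bullet> z - 1/2 .. u \<bullet> z + 1/2} t :: 'b::zero_neq_one)"
proof -
  have "u \<bullet> (z - t *\<^sub>R u) = u \<bullet> z - t"
    using assms by (simp add: inner_diff_right norm_eq_1)
  then have "z - t *\<^sub>R u \<in> slab u \<longleftrightarrow> t \<in> {u \<bullet> z - 1/2 .. u \<bullet> z + 1/2}"
    unfolding slab_def mem_Collect_eq atLeastAtMost_iff abs_le_iff by linarith
  then show ?thesis
    by (simp add: indicator_def)
qed

lemma nn_integral_lborel_translate: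
  fixes f :: "'a::euclidean_space \<Rightarrow> ennreal"
  assumes "f \<in> borel_measurable borel"
  shows "(\<integral>\<^sup>+x. f (x + c) \<partial>lborel) = (\<integral>\<^sup>+x. f x \<partial>lborel)"
proof -
  have "(\<integral>\<^sup>+x. f x \<partial>lborel) = (\<integral>\<^sup>+x. f x \<partial>distr lborel borel ((+) c))"
    by (simp add: lborel_distr_plus)
  also have "\<dots> = (\<integral>\<^sup>+x. f (c + x) \<partial>lborel)"
    using assms by (intro nn_integral_distr) auto
  finally show ?thesis
    by (simp add: add.commute)
qed

lemma integral_lborel_translate:
  fixes f :: "'a::euclidean_space \<Rightarrow> 'b::{banach,second_countable_topology}"
  assumes "f \<in> borel_measurable borel"
  shows "(\<integral>x. f (x + c) \<partial>lborel) = (\<integral>x. f x \<partial>lborel)"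
proof -
  have "(\<integral>x. f x \<partial>lborel) = (\<integral>x. f x \<partial>distr lborel borel ((+) c))"
    by (simp add: lborel_distr_plus)
  also have "\<dots> = (\<integral>x. f (c + x) \<partial>lborel)"
    using assms by (intro integral_distr) auto
  finally show ?thesis
    by (simp add: add.commute)
qed

lemma
  fixes k :: "'a::euclidean_space \<times> real \<Rightarrow> 'b::{banach,second_countable_topology}"
  assumes k: "integrable (lborel \<Otimes>\<^sub>M lborel) k"
  shows integrable_lborel_pair_shear: "integrable (lborel \<Otimes>\<^sub>M lborel) (\<lambda>(x, t). k (x + t *\<^sub>R u, t))"
    and integral_lborel_pair_shear:
      "integral\<^sup>L (lborel \<Otimes>\<^sub>M lborel) (\<lambda>(x, t). k (x + t *\<^sub>R u, t)) = integral\<^sup>L (lborel \<Otimes>\<^sub>M lborel) k"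
proof -
  have [measurable]: "k \<in> borel_measurable (lborel \<Otimes>\<^sub>M lborel)"
    using k by auto
  define h where "h = (\<lambda>(x, t). k (x + t *\<^sub>R u, t))"
  have [measurable]: "h \<in> borel_measurable (lborel \<Otimes>\<^sub>M lborel)"
    unfolding h_def by measurable
  have "(\<integral>\<^sup>+p. norm (h p) \<partial>(lborel \<Otimes>\<^sub>M lborel)) = (\<integral>\<^sup>+t. \<integral>\<^sup>+x. norm (h (x, t)) \<partial>lborel \<partial>lborel)"
    by (rule lborel_pair.nn_integral_snd[symmetric]) measurable
  also have "\<dots> = (\<integral>\<^sup>+t. \<integral>\<^sup>+z. norm (k (z, t)) \<partial>lborel \<partial>lborel)"
  proof (rule nn_integral_cong)
    fix t :: real
    have "(\<lambda>z. ennreal (norm (k (z, t)))) \<in> borel_measurable borel"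
      by measurable
    from nn_integral_lborel_translate[OF this, of "t *\<^sub>R u"]
    show "(\<integral>\<^sup>+x. norm (h (x, t)) \<partial>lborel) = (\<integral>\<^sup>+z. norm (k (z, t)) \<partial>lborel)"
      by (simp add: h_def)
  qed
  also have "\<dots> = (\<integral>\<^sup>+p. norm (k p) \<partial>(lborel \<Otimes>\<^sub>M lborel))"
    by (rule lborel_pair.nn_integral_snd) measurable
  also have "\<dots> < \<infinity>"
    using k by (simp add: integrable_iff_bounded)
  finally have h: "integrable (lborel \<Otimes>\<^sub>M lborel) h"
    by (simp add: integrable_iff_bounded)
  then show "integrable (lborel \<Otimes>\<^sub>M lborel) (\<lambda>(x, t). k (x + t *\<^sub>R u, t))"
    by (simp add: h_def)
  have "integral\<^sup>L (lborel \<Otimes>\<^sub>M lborel) h = (\<integral>t. \<integral>x. k (x + t *\<^sub>R u, t) \<partial>lborel \<partial>lborel)"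
    using lborel_pair.integral_snd[of "\<lambda>x t. k (x + t *\<^sub>R u, t)"] h by (simp add: h_def)
  also have "\<dots> = (\<integral>t. \<integral>z. k (z, t) \<partial>lborel \<partial>lborel)"
  proof (rule Bochner_Integration.integral_cong[OF refl])
    fix t :: real
    have "(\<lambda>z. k (z, t)) \<in> borel_measurable borel"
      by measurable
    from integral_lborel_translate[OF this, of "t *\<^sub>R u"]
    show "(\<integral>x. k (x + t *\<^sub>R u, t) \<partial>lborel) = (\<integral>z. k (z, t) \<partial>lborel)" .
  qed
  also have "\<dots> = integral\<^sup>L (lborel \<Otimes>\<^sub>M lborel) k"
    using lborel_pair.integral_snd[of "\<lambda>z t. k (z, t)"] k by simp
  finally show "integral\<^sup>L (lborel \<Otimes>\<^sub>M lborel) (\<lambda>(x, t). k (x + t *\<^sub>R u, t)) = integral\<^sup>L (lborel \<Otimes>\<^sub>M lborel) k"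
    by (simp add: h_def)
qed

lemma integral_lborel_slab_lines:
  fixes g :: "'a::euclidean_space \<Rightarrow> 'b::{banach,second_countable_topology}"
  assumes g: "integrable lborel g" and u: "norm u = 1"
  shows "(\<integral>z. g z \<partial>lborel) = (\<integral>x. indicator (slab u) x *\<^sub>R (\<integral>t. g (x + t *\<^sub>R u) \<partial>lborel) \<partial>lborel)"
proof -
  have [measurable]: "g \<in> borel_measurable borel"
    using g by (simp add: measurable_lborel1[symmetric])
  define k where "k = (\<lambda>(z::'a, t::real). indicator (slab u) (z - t *\<^sub>R u) *\<^sub>R g z)"
  have [measurable]: "k \<in> borel_measurable (lborel \<Otimes>\<^sub>M lborel)"
    unfolding k_def by measurable
  have line: "(\<integral>\<^sup>+t. indicator (slab u) (z - t *\<^sub>R u) \<partial>lborel) = 1" for z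
    by (simp add: indicator_slab_line[OF u])
  have "(\<integral>\<^sup>+p. norm (k p) \<partial>(lborel \<Otimes>\<^sub>M lborel)) = (\<integral>\<^sup>+z. \<integral>\<^sup>+t. norm (k (z, t)) \<partial>lborel \<partial>lborel)"
    by (rule lborel.nn_integral_fst[symmetric]) measurable
  also have "\<dots> = (\<integral>\<^sup>+z. \<integral>\<^sup>+t. ennreal (norm (g z)) * indicator (slab u) (z - t *\<^sub>R u) \<partial>lborel \<partial>lborel)"
    by (intro nn_integral_cong) (auto simp: k_def indicator_def)
  also have "\<dots> = (\<integral>\<^sup>+z. norm (g z) \<partial>lborel)"
    by (subst nn_integral_cmult) (auto simp: line)
  also have "\<dots> < \<infinity>"
    using g by (simp add: integrable_iff_bounded)
  finally have k: "integrable (lborel \<Otimes>\<^sub>M lborel) k"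
    by (simp add: integrable_iff_bounded)
  have "(\<integral>x. indicator (slab u) x *\<^sub>R (\<integral>t. g (x + t *\<^sub>R u) \<partial>lborel) \<partial>lborel)
      = (\<integral>x. \<integral>t. k (x + t *\<^sub>R u, t) \<partial>lborel \<partial>lborel)"
    by (simp add: k_def)
  also have "\<dots> = integral\<^sup>L (lborel \<Otimes>\<^sub>M lborel) (\<lambda>(x, t). k (x + t *\<^sub>R u, t))"
    using lborel_pair.integral_fst'[OF integrable_lborel_pair_shear[OF k]] by simp
  also have "\<dots> = (\<integral>z. \<integral>t. k (z, t) \<partial>lborel \<partial>lborel)"
    using lborel_pair.integral_fst'[OF k] by (simp add: integral_lborel_pair_shear[OF k])
  also have "\<dots> = (\<integral>z. g z \<partial>lborel)"
    by (simp add: k_def indicator_slab_line[OF u])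
  finally show ?thesis ..
qed

section \<open>Oscillatory integrals over convex sets\<close>

lemma integrable_indicator_scaleR_bounded:
  fixes f :: "'a::euclidean_space \<Rightarrow> 'b::{banach,second_countable_topology}"
  assumes C: "C \<in> sets borel" "bounded C" and f: "f \<in> borel_measurable borel"
    and B: "\<And>x. norm (f x) \<le> B"
  shows "integrable lborel (\<lambda>x. indicator C x *\<^sub>R f x)"
proof (rule Bochner_Integration.integrable_bound)
  show "integrable lborel (\<lambda>x. B * indicator C x :: real)"
    using C emeasure_bounded_finite[of C] by (intro integrable_mult_right integrable_real_indicator) auto
  show "(\<lambda>x. indicator C x *\<^sub>R f x) \<in> borel_measurable lborel"
    using C f by measurable
  show "AE x in lborel. norm (indicator C x *\<^sub>R f x) \<le> norm (B * indicator C x :: real)"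
    using B by (auto simp: indicator_def intro: order_trans[OF _ abs_ge_self])
qed

lemma norm_integral_indicator_le:
  fixes f :: "'a::euclidean_space \<Rightarrow> 'b::{banach,second_countable_topology}"
  assumes C: "C \<in> sets borel" "bounded C" and f: "f \<in> borel_measurable borel"
    and B: "\<And>x. norm (f x) \<le> B"
  shows "norm (\<integral>x. indicator C x *\<^sub>R f x \<partial>lborel) \<le> B * measure lborel C"
proof -
  have "norm (\<integral>x. indicator C x *\<^sub>R f x \<partial>lborel) \<le> (\<integral>x. B * indicator C x \<partial>lborel)"
  proof (rule Bochner_Integration.integral_norm_bound_integral)
    show "integrable lborel (\<lambda>x. indicator C x *\<^sub>R f x)"
      by (rule integrable_indicator_scaleR_bounded[OF C f B])
    show "integrable lborel (\<lambda>x. B * indicator C x)"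
      using C emeasure_bounded_finite[of C] by (intro integrable_mult_right integrable_real_indicator) auto
  qed (use B in \<open>auto simp: indicator_def\<close>)
  also have "\<dots> = B * measure lborel C"
    using C by simp
  finally show ?thesis .
qed

lemma norm_integral_indicator_diff_le:
  fixes f :: "'a::euclidean_space \<Rightarrow> 'b::{banach,second_countable_topology}"
  assumes C: "C \<in> sets borel" "bounded C" and C': "C' \<in> sets borel" "bounded C'"
    and f: "f \<in> borel_measurable borel" and f1: "\<And>x. norm (f x) \<le> 1"
  shows "norm ((\<integral>x. indicator C x *\<^sub>R f x \<partial>lborel) - (\<integral>x. indicator C' x *\<^sub>R f x \<partial>lborel))
           \<le> measure lborel (C - C') + measure lborel (C' - C)"
proof -
  have i: "integrable lborel (\<lambda>x. indicator C x *\<^sub>R f x)"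
    by (rule integrable_indicator_scaleR_bounded[OF C f f1])
  have i': "integrable lborel (\<lambda>x. indicator C' x *\<^sub>R f x)"
    by (rule integrable_indicator_scaleR_bounded[OF C' f f1])
  have "bounded (C - C')" "bounded (C' - C)"
    using C C' by (auto intro: bounded_subset)
  then have fin: "emeasure lborel (C - C') < \<infinity>" "emeasure lborel (C' - C) < \<infinity>"
    by (blast intro: emeasure_bounded_finite)+
  have "(\<integral>x. indicator C x *\<^sub>R f x \<partial>lborel) - (\<integral>x. indicator C' x *\<^sub>R f x \<partial>lborel)
      = (\<integral>x. indicator C x *\<^sub>R f x - indicator C' x *\<^sub>R f x \<partial>lborel)"
    using i i' by simp
  also have "norm \<dots> \<le> (\<integral>x. indicator (C - C') x + indicator (C' - C) x \<partial>lborel)"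
  proof (rule Bochner_Integration.integral_norm_bound_integral)
    show "integrable lborel (\<lambda>x. indicator (C - C') x + indicator (C' - C) x :: real)"
      using C C' fin by (intro Bochner_Integration.integrable_add integrable_real_indicator) auto
  qed (use i i' f1 in \<open>auto simp: indicator_def\<close>)
  also have "\<dots> = measure lborel (C - C') + measure lborel (C' - C)"
    using C C' fin by (subst Bochner_Integration.integral_add) auto
  finally show ?thesis .
qed

lemma homothety_subset_Int_translation:
  fixes C :: "'a::real_normed_vector set"
  assumes cvx: "convex C" and cb: "cball c r \<subseteq> C" and r: "r > 0"
    and w: "norm w \<le> e * r" and e: "e \<le> 1"
  shows "(\<lambda>x. (w + e *\<^sub>R c) + (1 - e) *\<^sub>R x) ` C \<subseteq> C \<inter> (+) w ` C"
proof -
  have "c \<in> C"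
    using cb r by auto
  have "0 \<le> e * r"
    using w norm_ge_zero[of w] by linarith
  then have e0: "0 \<le> e"
    using r by (simp add: zero_le_mult_iff)
  have "(w + e *\<^sub>R c) + (1 - e) *\<^sub>R x \<in> C" if x: "x \<in> C" for x
  proof (cases "e = 0")
    case True
    then show ?thesis
      using x w by simp
  next
    case False
    then have cw: "c + (1 / e) *\<^sub>R w \<in> C"
      using w e0 by (intro subsetD[OF cb]) (simp add: dist_norm field_simps)
    have "(w + e *\<^sub>R c) + (1 - e) *\<^sub>R x = (1 - e) *\<^sub>R x + e *\<^sub>R (c + (1 / e) *\<^sub>R w)"
      using False by (simp add: algebra_simps)
    then show ?thesis
      using convexD[OF cvx x cw, of "1 - e" e] e0 e by (simp only:)
  qed
  moreover have "(w + e *\<^sub>R c) + (1 - e) *\<^sub>R x \<in> (+) w ` C" if x: "x \<in> C" for x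
  proof -
    have "e *\<^sub>R c + (1 - e) *\<^sub>R x \<in> C"
      using convexD[OF cvx \<open>c \<in> C\<close> x] e0 e by simp
    then show ?thesis
      by (rule rev_image_eqI) (simp add: algebra_simps)
  qed
  ultimately show ?thesis
    by blast
qed

text \<open>The homothetic copy above has volume \<open>(1 - \<parallel>w\<parallel>/r)\<^sup>n |C|\<close>; Bernoulli's inequality linearises this.\<close>

lemma measure_Int_translation_convex_ge:
  fixes C :: "'a::euclidean_space set"
  assumes cvx: "convex C" and bd: "bounded C" and cb: "cball c r \<subseteq> C" and r: "r > 0"
  shows "(1 - DIM('a) * (norm w / r)) * measure lebesgue C \<le> measure lebesgue (C \<inter> (+) w ` C)"
proof (cases "norm w / r \<le> 1")
  case False
  have "1 \<le> real DIM('a)"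
    using DIM_positive[where 'a='a] by linarith
  then have "1 - DIM('a) * (norm w / r) \<le> 0"
    using mult_mono[of 1 "DIM('a)" 1 "norm w / r"] False by simp
  then show ?thesis
    by (meson measure_nonneg mult_nonpos_nonneg order_trans)
next
  case True
  define e where "e = norm w / r"
  define X where "X = (\<lambda>x. (w + e *\<^sub>R c) + (1 - e) *\<^sub>R x) ` C"
  have CL: "C \<in> lmeasurable"
    by (rule measurable_convex[OF cvx bd])
  have "bounded X"
    using bounded_translation[OF bounded_scaling[OF bd], of "w + e *\<^sub>R c" "1 - e"]
    by (simp add: X_def image_image)
  then have "X \<in> lmeasurable"
    unfolding X_def by (intro measurable_convex convex_affinity cvx)
  moreover have "X \<subseteq> C \<inter> (+) w ` C"
    using homothety_subset_Int_translation[OF cvx cb r, of w e] r True by (simp add: X_def e_def)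
  ultimately have "measure lebesgue X \<le> measure lebesgue (C \<inter> (+) w ` C)"
    using CL measurable_translation[OF CL] by (intro measure_mono_fmeasurable) auto
  moreover have "measure lebesgue X = (1 - e) ^ DIM('a) * measure lebesgue C"
    using measure_lebesgue_affine[of "1 - e" "w + e *\<^sub>R c" C] True by (simp add: X_def e_def add.commute)
  moreover have "1 - DIM('a) * e \<le> (1 - e) ^ DIM('a)"
    using Bernoulli_inequality[of "- e" "DIM('a)"] True by (simp add: e_def)
  ultimately show ?thesis
    using mult_right_mono[OF _ measure_nonneg, of "1 - DIM('a) * e" "(1 - e) ^ DIM('a)" lebesgue C]
    by (simp add: e_def)
qed

lemma measure_Diff_translation_convex_le:
  fixes C :: "'a::euclidean_space set"
  assumes cvx: "convex C" and bd: "bounded C" and cb: "cball c r \<subseteq> C" and r: "r > 0"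
  shows "measure lebesgue (C - (+) w ` C) \<le> DIM('a) * (norm w / r) * measure lebesgue C"
    and "measure lebesgue ((+) w ` C - C) \<le> DIM('a) * (norm w / r) * measure lebesgue C"
proof -
  have CL: "C \<in> lmeasurable"
    by (rule measurable_convex[OF cvx bd])
  have C'L: "(+) w ` C \<in> lmeasurable"
    by (rule measurable_translation[OF CL])
  note Int = measure_Int_translation_convex_ge[OF cvx bd cb r, of w]
  have "measure lebesgue (C - (+) w ` C) = measure lebesgue (C - (C \<inter> (+) w ` C))"
    by (simp add: Diff_Int)
  also have "\<dots> = measure lebesgue C - measure lebesgue (C \<inter> (+) w ` C)"
    using CL C'L by (intro measure_Diff) (auto simp: fmeasurable_def)
  finally show "measure lebesgue (C - (+) w ` C) \<le> DIM('a) * (norm w / r) * measure lebesgue C"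
    using Int by (simp add: algebra_simps)
  have "measure lebesgue ((+) w ` C - C) = measure lebesgue ((+) w ` C - (C \<inter> (+) w ` C))"
    by (rule arg_cong[where f="measure lebesgue"]) blast
  also have "\<dots> = measure lebesgue ((+) w ` C) - measure lebesgue (C \<inter> (+) w ` C)"
    using CL C'L by (intro measure_Diff) (auto simp: fmeasurable_def)
  also have "\<dots> = measure lebesgue C - measure lebesgue (C \<inter> (+) w ` C)"
    by (simp only: measure_translation)
  finally show "measure lebesgue ((+) w ` C - C) \<le> DIM('a) * (norm w / r) * measure lebesgue C"
    using Int by (simp add: algebra_simps)
qed

lemma borel_measurable_cis [measurable (raw)]:
  assumes "f \<in> borel_measurable M"
  shows "(\<lambda>x. cis (f x)) \<in> borel_measurable M"
  using assms borel_measurable_continuous_onI[OF continuous_on_cis[OF continuous_on_id]]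
  by (rule measurable_compose)

lemma norm_integral_antiperiodic_le:
  fixes f :: "'a::euclidean_space \<Rightarrow> 'b::{banach,second_countable_topology}"
  assumes C: "C \<in> sets borel" "bounded C" and f: "f \<in> borel_measurable borel" "\<And>x. norm (f x) \<le> 1"
    and anti: "\<And>y. f (y + w) = - f y"
  shows "2 * norm (\<integral>x. indicator C x *\<^sub>R f x \<partial>lborel)
    \<le> measure lebesgue (C - (+) w ` C) + measure lebesgue ((+) w ` C - C)"
proof -
  have C'_eq: "(+) w ` C = {x. x - w \<in> C}"
    by (auto simp: image_iff intro!: bexI[where x="_ - w"])
  have "(+) w ` C \<in> sets borel"
    using C f by (simp add: C'_eq)
  moreover have "bounded ((+) w ` C)"
    using C by (simp add: bounded_translation)
  ultimately have C': "(+) w ` C \<in> sets borel" "bounded ((+) w ` C)" .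
  define I where "I = (\<integral>x. indicator C x *\<^sub>R f x \<partial>lborel)"
  have "(\<integral>x. indicator ((+) w ` C) x *\<^sub>R f x \<partial>lborel)
      = (\<integral>y. indicator ((+) w ` C) (y + w) *\<^sub>R f (y + w) \<partial>lborel)"
    by (rule integral_lborel_translate[symmetric]) (use C' f in measurable)
  also have "\<dots> = - I"
    by (simp add: I_def anti C'_eq indicator_def)
  finally have "norm (I - (- I)) \<le> measure lborel (C - (+) w ` C) + measure lborel ((+) w ` C - C)"
    using norm_integral_indicator_diff_le[OF C C' f] by (simp add: I_def)
  then show ?thesis
    using C C' by (simp add: I_def flip: scaleR_2)
qed

text \<open>Translation by half a period flips the sign of a plane wave, and translates of a convex body with
  nonempty interior differ little in volume.\<close>

lemma oscillatory_integral_convex_bound: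
  fixes C :: "'a::euclidean_space set"
  assumes C: "C \<in> sets borel" and cvx: "convex C" and bd: "bounded C" and g: "g \<noteq> 0"
  shows "\<exists>K. \<forall>\<omega>. \<omega> \<noteq> 0 \<longrightarrow>
    norm (\<integral>x. indicator C x *\<^sub>R cis (- \<omega> * (c + g \<bullet> x)) \<partial>lborel) \<le> K / \<bar>\<omega>\<bar>"
proof (cases "interior C = {}")
  case True
  then have "measure lebesgue C = 0"
    using negligible_convex_interior[OF cvx] by (simp add: negligible_imp_measure0)
  then have "measure lborel C = 0"
    using C by simp
  then show ?thesis
    using norm_integral_indicator_le[OF C bd, of "\<lambda>x. cis (- _ * (c + g \<bullet> x))" 1]
    by (intro exI[of _ 0]) (simp add: measurable_compose)
next
  case False
  then obtain z r where r: "r > 0" and cb: "cball z r \<subseteq> C"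
    by (meson all_not_in_conv open_contains_cball_eq open_interior interior_subset order_trans)
  show ?thesis
  proof (intro exI allI impI)
    fix \<omega> :: real
    assume \<omega>: "\<omega> \<noteq> 0"
    define w where "w = (pi / (\<omega> * (norm g)\<^sup>2)) *\<^sub>R g"
    have "- \<omega> * (c + g \<bullet> (y + w)) = - \<omega> * (c + g \<bullet> y) - pi" for y
      using g \<omega> by (simp add: w_def inner_add_right power2_norm_eq_inner algebra_simps)
    then have "cis (- \<omega> * (c + g \<bullet> (y + w))) = - cis (- \<omega> * (c + g \<bullet> y))" for y
      by (simp add: minus_cis')
    then have "2 * norm (\<integral>x. indicator C x *\<^sub>R cis (- \<omega> * (c + g \<bullet> x)) \<partial>lborel)
        \<le> measure lebesgue (C - (+) w ` C) + measure lebesgue ((+) w ` C - C)"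
      using C bd by (intro norm_integral_antiperiodic_le) auto
    also have "\<dots> \<le> 2 * (DIM('a) * (norm w / r) * measure lebesgue C)"
      using add_mono[OF measure_Diff_translation_convex_le[OF cvx bd cb r, of w]] by (simp only: mult_2)
    also have "\<dots> = 2 * (DIM('a) * pi * measure lborel C / (norm g * r) / \<bar>\<omega>\<bar>)"
      using C g \<omega> by (simp add: w_def power2_eq_square abs_mult)
    finally show "norm (\<integral>x. indicator C x *\<^sub>R cis (- \<omega> * (c + g \<bullet> x)) \<partial>lborel)
        \<le> DIM('a) * pi * measure lborel C / (norm g * r) / \<bar>\<omega>\<bar>"
      by simp
  qed
qed

section \<open>Minima of affine functions\<close>

lemma ex1_least_argmin:
  fixes v :: "'i::linorder \<Rightarrow> 'b::linorder"
  assumes J: "finite J" "J \<noteq> {}"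
  shows "\<exists>!j. j \<in> J \<and> (\<forall>k\<in>J. (k < j \<longrightarrow> v j < v k) \<and> v j \<le> v k)"
proof -
  define m where "m = (MIN k\<in>J. v k)"
  have "m \<in> v ` J"
    using J by (simp add: m_def)
  then have ne: "{k\<in>J. v k = m} \<noteq> {}"
    by auto
  define j where "j = Min {k\<in>J. v k = m}"
  have j: "j \<in> J" "v j = m"
    using Min_in[OF _ ne] J(1) by (simp_all add: j_def)
  have least: "j \<le> k" if "k \<in> J" "v k = m" for k
    using that J(1) by (simp add: j_def)
  have min: "v j \<le> v k" if "k \<in> J" for k
    using that J j by (simp add: m_def)
  have "v j < v k" if "k \<in> J" "k < j" for k
  proof (rule ccontr)
    assume "\<not> v j < v k"
    then have "v k = m"
      using min[OF that(1)] j(2) by simp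
    then show False
      using least[OF that(1)] that(2) by simp
  qed
  then have argmin: "\<forall>k\<in>J. (k < j \<longrightarrow> v j < v k) \<and> v j \<le> v k"
    using min by blast
  show ?thesis
  proof (rule ex1I[of _ j])
    fix j' assume j': "j' \<in> J \<and> (\<forall>k\<in>J. (k < j' \<longrightarrow> v j' < v k) \<and> v j' \<le> v k)"
    show "j' = j"
    proof (rule linorder_cases[of j' j])
      assume "j' < j"
      then have "v j < v j'"
        using argmin j' by blast
      moreover have "v j' \<le> v j"
        using j' j(1) by blast
      ultimately show ?thesis
        by simp
    next
      assume "j < j'"
      then have "v j' < v j"
        using j' j(1) by blast
      then show ?thesis
        using min j' by (simp add: leD)
    qed
  qed (use j(1) argmin in blast)
qed

lemma sum_least_argmin:
  fixes v :: "'i::linorder \<Rightarrow> real" and F :: "real \<Rightarrow> 'b::real_vector"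
  assumes J: "finite J" "J \<noteq> {}"
  shows "(\<Sum>j\<in>J. if v j < t \<and> (\<forall>k\<in>J. (k < j \<longrightarrow> v j < v k) \<and> v j \<le> v k) then F (v j) else 0)
       = (if (MIN j\<in>J. v j) < t then F (MIN j\<in>J. v j) else 0)"
proof -
  define m where "m = (MIN j\<in>J. v j)"
  define A where "A j \<longleftrightarrow> j \<in> J \<and> (\<forall>k\<in>J. (k < j \<longrightarrow> v j < v k) \<and> v j \<le> v k)" for j
  obtain j0 where j0: "A j0" and uniq: "\<And>j. A j \<Longrightarrow> j = j0"
    using ex1_least_argmin[OF J, of v] unfolding A_def by (elim ex1E) blast
  have val: "v j = m" if "A j" for j
    using that J unfolding m_def A_def by (intro Min_eqI[symmetric]) auto
  have "(if v j < t \<and> (\<forall>k\<in>J. (k < j \<longrightarrow> v j < v k) \<and> v j \<le> v k) then F (v j) else 0)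
      = (if j = j0 \<and> m < t then F m else 0)" if "j \<in> J" for j
  proof (cases "A j")
    case True
    then have "j = j0" "v j = m"
      using uniq val by blast+
    then show ?thesis
      using True by (simp add: A_def)
  next
    case False
    then show ?thesis
      using j0 that by (auto simp: A_def)
  qed
  then have "(\<Sum>j\<in>J. if v j < t \<and> (\<forall>k\<in>J. (k < j \<longrightarrow> v j < v k) \<and> v j \<le> v k) then F (v j) else 0)
      = (\<Sum>j\<in>J. if j = j0 \<and> m < t then F m else 0)"
    by (rule sum.cong[OF refl])
  also have "\<dots> = (if m < t then F m else 0)"
    using J j0 by (simp add: A_def)
  finally show ?thesis
    by (simp add: m_def)
qed

lemma integrable_indicator_cis_min_affine:
  fixes H :: "'a::euclidean_space set" and J :: "'i set"
  assumes H: "H \<in> sets borel" "bounded H" and J: "finite J"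
    and f: "\<And>x. x \<in> H \<Longrightarrow> f x = (MIN j\<in>J. c j + g j \<bullet> x)"
  shows "integrable lborel (\<lambda>x. indicator H x *\<^sub>R cis (- \<omega> * f x))"
proof -
  have "integrable lborel (\<lambda>x. indicator H x *\<^sub>R cis (- \<omega> * (MIN j\<in>J. c j + g j \<bullet> x)))"
    using H J by (intro integrable_indicator_scaleR_bounded[where B = 1]) auto
  then show ?thesis
    by (rule Bochner_Integration.integrable_cong[OF refl, THEN iffD1, rotated])
      (auto simp: f indicator_def)
qed

definition min_cell :: "'i::linorder set \<Rightarrow> ('i \<Rightarrow> real) \<Rightarrow> ('i \<Rightarrow> 'a::real_inner) \<Rightarrow> 'i \<Rightarrow> 'a set" where
  "min_cell J c g j =
    {x. \<forall>k\<in>J. (k < j \<longrightarrow> c j + g j \<bullet> x < c k + g k \<bullet> x) \<and> c j + g j \<bullet> x \<le> c k + g k \<bullet> x}"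

lemma min_cell_eq_Inter_halfspaces:
  "min_cell J c g j = (\<Inter>k\<in>{k\<in>J. k < j}. {x. (g j - g k) \<bullet> x < c k - c j})
                      \<inter> (\<Inter>k\<in>J. {x. (g j - g k) \<bullet> x \<le> c k - c j})"
proof -
  have "c j + g j \<bullet> x < c k + g k \<bullet> x \<longleftrightarrow> (g j - g k) \<bullet> x < c k - c j"
    and "c j + g j \<bullet> x \<le> c k + g k \<bullet> x \<longleftrightarrow> (g j - g k) \<bullet> x \<le> c k - c j" for x k
    by (auto simp: inner_diff_left)
  then show ?thesis
    by (auto simp: min_cell_def)
qed

lemma convex_min_cell: "convex (min_cell J c g j)"
  unfolding min_cell_eq_Inter_halfspaces
  by (intro convex_Int convex_INT ballI convex_halfspace_lt convex_halfspace_le)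

lemma borel_min_cell:
  fixes g :: "'i::linorder \<Rightarrow> 'a::euclidean_space"
  assumes "finite J"
  shows "min_cell J c g j \<in> sets borel"
proof -
  have "open (\<Inter>k\<in>{k\<in>J. k < j}. {x. (g j - g k) \<bullet> x < c k - c j})"
    using assms by (intro open_INT) (auto intro: open_halfspace_lt)
  moreover have "closed (\<Inter>k\<in>J. {x. (g j - g k) \<bullet> x \<le> c k - c j})"
    by (intro closed_INT ballI closed_halfspace_le)
  ultimately show ?thesis
    unfolding min_cell_eq_Inter_halfspaces by (intro sets.Int borel_open borel_closed)
qed

text \<open>The cells of points below height \<open>t\<close> whose minimum is attained first by \<open>j\<close> partition
  \<open>{x \<in> H. f x < t}\<close>; on each, the integrand is a plane wave over a convex set. A cell with a constant
  wave is empty, because the value \<open>t\<close> of \<open>f\<close> at \<open>x\<^sub>0\<close> lies below every affine function.\<close>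

lemma oscillatory_integral_min_affine:
  fixes H :: "'a::euclidean_space set" and J :: "'i::linorder set"
  assumes H: "H \<in> sets borel" "convex H" "bounded H" and J: "finite J" "J \<noteq> {}"
    and f: "\<And>x. x \<in> H \<Longrightarrow> f x = (MIN j\<in>J. c j + g j \<bullet> x)"
    and f_le: "\<And>x. x \<in> H \<Longrightarrow> f x \<le> t" and x0: "x0 \<in> H" "f x0 = t"
  shows "\<exists>K. \<forall>\<omega>. \<omega> \<noteq> 0 \<longrightarrow>
    norm ((\<integral>x. indicator H x *\<^sub>R cis (- \<omega> * f x) \<partial>lborel)
          - measure lborel {x\<in>H. f x = t} *\<^sub>R cis (- \<omega> * t)) \<le> K / \<bar>\<omega>\<bar>"
proof -
  define G where "G j = H \<inter> {x. c j + g j \<bullet> x < t} \<inter> min_cell J c g j" for j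
  define T where "T = {x\<in>H. f x = t}"
  have T: "T \<in> sets borel" "bounded T"
    using H J by (simp_all add: T_def f bounded_subset[OF H(3)] cong: conj_cong)
  have "convex {x. c j + g j \<bullet> x < t}" for j
    using convex_halfspace_lt[of "g j" "t - c j"] by (simp add: algebra_simps)
  then have G: "G j \<in> sets borel" "convex (G j)" "bounded (G j)" for j
    using H J by (auto simp: G_def borel_min_cell convex_min_cell intro!: convex_Int bounded_subset[OF H(3)])
  have split: "indicator H x *\<^sub>R cis (- \<omega> * f x)
      = indicator T x *\<^sub>R cis (- \<omega> * t) + (\<Sum>j\<in>J. indicator (G j) x *\<^sub>R cis (- \<omega> * (c j + g j \<bullet> x)))" for \<omega> x
  proof (cases "x \<in> H")
    case False
    then show ?thesis
      by (simp add: T_def G_def)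
  next
    case True
    have "(\<Sum>j\<in>J. indicator (G j) x *\<^sub>R cis (- \<omega> * (c j + g j \<bullet> x)))
        = (\<Sum>j\<in>J. if c j + g j \<bullet> x < t \<and> (\<forall>k\<in>J. (k < j \<longrightarrow> c j + g j \<bullet> x < c k + g k \<bullet> x)
              \<and> c j + g j \<bullet> x \<le> c k + g k \<bullet> x) then cis (- \<omega> * (c j + g j \<bullet> x)) else 0)"
      using True by (intro sum.cong refl) (simp add: G_def min_cell_def indicator_def)
    also have "\<dots> = (if f x < t then cis (- \<omega> * f x) else 0)"
      unfolding f[OF True] by (rule sum_least_argmin[OF J])
    finally show ?thesis
      using f_le[OF True] True by (auto simp: T_def indicator_def)
  qed
  have int_G: "integrable lborel (\<lambda>x. indicator (G j) x *\<^sub>R cis (- \<omega> * (c j + g j \<bullet> x)))" for j \<omega>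
    using G[of j] by (intro integrable_indicator_scaleR_bounded[where B = 1]) auto
  have int_T: "integrable lborel (\<lambda>x. indicator T x *\<^sub>R cis (- \<omega> * t))" for \<omega>
    using T by (intro integrable_indicator_scaleR_bounded[where B = 1]) auto
  have diff: "(\<integral>x. indicator H x *\<^sub>R cis (- \<omega> * f x) \<partial>lborel) - measure lborel T *\<^sub>R cis (- \<omega> * t)
      = (\<Sum>j\<in>J. \<integral>x. indicator (G j) x *\<^sub>R cis (- \<omega> * (c j + g j \<bullet> x)) \<partial>lborel)" for \<omega>
  proof -
    have "(\<integral>x. indicator T x *\<^sub>R cis (- \<omega> * t) \<partial>lborel) = measure lborel T *\<^sub>R cis (- \<omega> * t)"
      using T emeasure_bounded_finite[of T] by (subst integral_scaleR_left) auto
    then show ?thesis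
      unfolding split using int_T int_G by (simp add: Bochner_Integration.integral_add integral_sum)
  qed
  have "\<exists>K. \<forall>\<omega>. \<omega> \<noteq> 0 \<longrightarrow>
      norm (\<integral>x. indicator (G j) x *\<^sub>R cis (- \<omega> * (c j + g j \<bullet> x)) \<partial>lborel) \<le> K / \<bar>\<omega>\<bar>"
    if j: "j \<in> J" for j
  proof (cases "g j = 0")
    case True
    have "t \<le> c j + g j \<bullet> x0"
      using J j f[OF x0(1)] x0(2) by (auto intro: Min_le)
    then have "G j = {}"
      using True by (auto simp: G_def)
    then show ?thesis
      by (intro exI[of _ 0]) simp
  next
    case False
    then show ?thesis
      using oscillatory_integral_convex_bound[OF G] by blast
  qed
  then have "\<forall>j\<in>J. \<exists>K. \<forall>\<omega>. \<omega> \<noteq> 0 \<longrightarrow>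
      norm (\<integral>x. indicator (G j) x *\<^sub>R cis (- \<omega> * (c j + g j \<bullet> x)) \<partial>lborel) \<le> K / \<bar>\<omega>\<bar>"
    by blast
  from bchoice[OF this] obtain K where K: "\<forall>j\<in>J. \<forall>\<omega>. \<omega> \<noteq> 0 \<longrightarrow>
      norm (\<integral>x. indicator (G j) x *\<^sub>R cis (- \<omega> * (c j + g j \<bullet> x)) \<partial>lborel) \<le> K j / \<bar>\<omega>\<bar>"
    by blast
  have "norm ((\<integral>x. indicator H x *\<^sub>R cis (- \<omega> * f x) \<partial>lborel) - measure lborel T *\<^sub>R cis (- \<omega> * t))
      \<le> (\<Sum>j\<in>J. K j) / \<bar>\<omega>\<bar>" if "\<omega> \<noteq> 0" for \<omega>
    unfolding diff sum_divide_distrib using K that by (intro sum_norm_le) auto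
  then show ?thesis
    by (auto simp: T_def)
qed

section \<open>Lines through a convex body\<close>

definition slab_shadow :: "'a::euclidean_space \<Rightarrow> 'a set \<Rightarrow> 'a set" where
  "slab_shadow u K = {x \<in> slab u. \<exists>t. x + t *\<^sub>R u \<in> K}"

text \<open>For compact \<open>P\<close> and \<open>x \<in> slab_shadow u P\<close>, the line \<open>x + \<real>u\<close> leaves \<open>P\<close> at height
  \<open>exit_height P u x\<close> and enters it at height \<open>- exit_height P (- u) x\<close>.\<close>

definition exit_height :: "'a::euclidean_space set \<Rightarrow> 'a \<Rightarrow> 'a \<Rightarrow> real" where
  "exit_height P u x = u \<bullet> x + Sup {t. x + t *\<^sub>R u \<in> P}"

lemma slab_shadow_uminus [simp]: "slab_shadow (- u) K = slab_shadow u K"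
proof -
  have "x + t *\<^sub>R (- u) = x + (- t) *\<^sub>R u" for x t
    by simp
  then show ?thesis
    unfolding slab_shadow_def by (metis (no_types, opaque_lifting) minus_minus slab_uminus)
qed

lemma closed_slab_shadow:
  fixes K :: "'a::euclidean_space set"
  assumes "compact K"
  shows "closed (slab_shadow u K)"
proof -
  have "{x. \<exists>t. x + t *\<^sub>R u \<in> K} = (\<Union>v\<in>span {u}. \<Union>y\<in>K. {v + y})"
  proof (intro set_eqI iffI)
    fix x assume "x \<in> {x. \<exists>t. x + t *\<^sub>R u \<in> K}"
    then obtain t where t: "x + t *\<^sub>R u \<in> K"
      by auto
    moreover have "(- t) *\<^sub>R u \<in> span {u}"
      by (rule span_scale[OF span_base]) simp
    moreover have "x = (- t) *\<^sub>R u + (x + t *\<^sub>R u)"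
      by simp
    ultimately show "x \<in> (\<Union>v\<in>span {u}. \<Union>y\<in>K. {v + y})"
      by blast
  next
    fix x assume "x \<in> (\<Union>v\<in>span {u}. \<Union>y\<in>K. {v + y})"
    then obtain k y where "y \<in> K" "x = k *\<^sub>R u + y"
      by (auto simp: span_singleton)
    then show "x \<in> {x. \<exists>t. x + t *\<^sub>R u \<in> K}"
      by (auto intro!: exI[of _ "- k"])
  qed
  then have "closed {x. \<exists>t. x + t *\<^sub>R u \<in> K}"
    using closed_compact_sums[OF closed_span assms] by simp
  moreover have "slab_shadow u K = slab u \<inter> {x. \<exists>t. x + t *\<^sub>R u \<in> K}"
    by (auto simp: slab_shadow_def)
  ultimately show ?thesis
    by (simp add: closed_Int closed_slab)
qed

lemma bounded_slab_shadow:
  fixes K :: "'a::euclidean_space set"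
  assumes K: "bounded K" and u: "norm u = 1"
  shows "bounded (slab_shadow u K)"
proof -
  obtain B where B: "\<And>z. z \<in> K \<Longrightarrow> norm z \<le> B"
    using K by (auto simp: bounded_iff)
  have "norm x \<le> 2 * B + 1" if x: "x \<in> slab_shadow u K" for x
  proof -
    obtain t where t: "x + t *\<^sub>R u \<in> K" and sl: "\<bar>u \<bullet> x\<bar> * 2 \<le> 1"
      using x by (auto simp: slab_shadow_def slab_def)
    have "u \<bullet> (x + t *\<^sub>R u) = u \<bullet> x + t"
      using u by (simp add: inner_add_right norm_eq_1)
    moreover have "\<bar>u \<bullet> (x + t *\<^sub>R u)\<bar> \<le> B"
      using Cauchy_Schwarz_ineq2[of u "x + t *\<^sub>R u"] B[OF t] u by simp
    ultimately have "\<bar>t\<bar> \<le> B + 1/2"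
      using sl by linarith
    moreover have "norm x \<le> norm (x + t *\<^sub>R u) + \<bar>t\<bar>"
      using norm_triangle_ineq4[of "x + t *\<^sub>R u" "t *\<^sub>R u"] u by simp
    ultimately show ?thesis
      using B[OF t] by linarith
  qed
  then show ?thesis
    by (auto simp: bounded_iff)
qed

lemma convex_slab_shadow:
  fixes K :: "'a::euclidean_space set"
  assumes "convex K"
  shows "convex (slab_shadow u K)"
proof -
  have "convex {x. \<exists>t. x + t *\<^sub>R u \<in> K}"
  proof (rule convexI)
    fix x y :: 'a and p q :: real
    assume "x \<in> {x. \<exists>t. x + t *\<^sub>R u \<in> K}" "y \<in> {x. \<exists>t. x + t *\<^sub>R u \<in> K}"
      and pq: "0 \<le> p" "0 \<le> q" "p + q = 1"
    then obtain s t where "x + s *\<^sub>R u \<in> K" "y + t *\<^sub>R u \<in> K"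
      by auto
    then have "p *\<^sub>R (x + s *\<^sub>R u) + q *\<^sub>R (y + t *\<^sub>R u) \<in> K"
      using convexD[OF assms _ _ pq] by blast
    moreover have "p *\<^sub>R (x + s *\<^sub>R u) + q *\<^sub>R (y + t *\<^sub>R u) = (p *\<^sub>R x + q *\<^sub>R y) + (p * s + q * t) *\<^sub>R u"
      by (simp add: algebra_simps)
    ultimately show "p *\<^sub>R x + q *\<^sub>R y \<in> {x. \<exists>t. x + t *\<^sub>R u \<in> K}"
      by auto
  qed
  moreover have "slab_shadow u K = slab u \<inter> {x. \<exists>t. x + t *\<^sub>R u \<in> K}"
    by (auto simp: slab_shadow_def)
  ultimately show ?thesis
    by (simp add: convex_Int convex_slab)
qed

lemma compact_line_params:
  fixes P :: "'a::euclidean_space set"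
  assumes P: "compact P" and u: "u \<noteq> 0"
  shows "compact {t. x + t *\<^sub>R u \<in> P}"
proof -
  have "{t. x + t *\<^sub>R u \<in> P} = (\<lambda>t. x + t *\<^sub>R u) -` P"
    by auto
  then have "closed {t. x + t *\<^sub>R u \<in> P}"
    using compact_imp_closed[OF P] by (simp add: continuous_closed_vimage continuous_intros)
  moreover obtain B where B: "\<And>z. z \<in> P \<Longrightarrow> norm z \<le> B"
    using compact_imp_bounded[OF P] by (auto simp: bounded_iff)
  have "\<bar>t\<bar> \<le> (B + norm x) / norm u" if "x + t *\<^sub>R u \<in> P" for t
  proof -
    have "\<bar>t\<bar> * norm u \<le> norm (x + t *\<^sub>R u) + norm x"
      using norm_triangle_ineq4[of "x + t *\<^sub>R u" x] by simp
    then show ?thesis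
      using B[OF that] u by (simp add: pos_le_divide_eq)
  qed
  then have "bounded {t. x + t *\<^sub>R u \<in> P}"
    by (auto simp: bounded_iff)
  ultimately show ?thesis
    by (simp add: compact_eq_bounded_closed)
qed

lemma exit_point:
  fixes P :: "'a::euclidean_space set"
  assumes P: "compact P" and u: "norm u = 1" and t0: "x + t0 *\<^sub>R u \<in> P"
  shows "x + Sup {t. x + t *\<^sub>R u \<in> P} *\<^sub>R u \<in> P"
    and "\<And>t. x + t *\<^sub>R u \<in> P \<Longrightarrow> u \<bullet> (x + t *\<^sub>R u) \<le> exit_height P u x"
proof -
  have u0: "u \<noteq> 0"
    using u by auto
  have cpt: "compact {t. x + t *\<^sub>R u \<in> P}"
    by (rule compact_line_params[OF P u0])
  then have bdd: "bdd_above {t. x + t *\<^sub>R u \<in> P}"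
    by (simp add: bounded_imp_bdd_above compact_imp_bounded)
  show "x + Sup {t. x + t *\<^sub>R u \<in> P} *\<^sub>R u \<in> P"
    using closed_contains_Sup[OF _ bdd compact_imp_closed[OF cpt]] t0 by auto
  fix t assume "x + t *\<^sub>R u \<in> P"
  then have "t \<le> Sup {t. x + t *\<^sub>R u \<in> P}"
    by (intro cSup_upper bdd) simp
  then show "u \<bullet> (x + t *\<^sub>R u) \<le> exit_height P u x"
    using u by (simp add: exit_height_def inner_add_right norm_eq_1)
qed

lemma line_params_interval:
  fixes P :: "'a::euclidean_space set"
  assumes P: "compact P" "convex P" and u: "norm u = 1" and x: "x \<in> slab_shadow u P"
  shows "{t. x + t *\<^sub>R u \<in> P} = {- exit_height P (- u) x - u \<bullet> x .. exit_height P u x - u \<bullet> x}"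
    and "- exit_height P (- u) x \<le> exit_height P u x"
proof -
  have "convex {t. x + t *\<^sub>R u \<in> P}"
  proof (rule convexI)
    fix s t p q :: real
    assume "s \<in> {t. x + t *\<^sub>R u \<in> P}" "t \<in> {t. x + t *\<^sub>R u \<in> P}" and pq: "0 \<le> p" "0 \<le> q" "p + q = 1"
    then have "p *\<^sub>R (x + s *\<^sub>R u) + q *\<^sub>R (x + t *\<^sub>R u) \<in> P"
      using convexD[OF P(2) _ _ pq] by blast
    moreover have "p *\<^sub>R (x + s *\<^sub>R u) + q *\<^sub>R (x + t *\<^sub>R u) = x + (p *\<^sub>R s + q *\<^sub>R t) *\<^sub>R u"
      using pq by (simp add: algebra_simps flip: scaleR_add_left)
    ultimately show "p *\<^sub>R s + q *\<^sub>R t \<in> {t. x + t *\<^sub>R u \<in> P}"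
      by simp
  qed
  then have "connected {t. x + t *\<^sub>R u \<in> P}"
    by (rule convex_connected)
  moreover have "compact {t. x + t *\<^sub>R u \<in> P}"
    using u by (intro compact_line_params[OF P(1)]) auto
  ultimately obtain a b where ab: "{t. x + t *\<^sub>R u \<in> P} = {a..b}"
    using connected_compact_interval_1 by blast
  moreover have "{t. x + t *\<^sub>R u \<in> P} \<noteq> {}"
    using x by (auto simp: slab_shadow_def)
  ultimately have "a \<le> b"
    by simp
  have "{t. x + t *\<^sub>R (- u) \<in> P} = {- b .. - a}"
  proof (intro set_eqI)
    fix t :: real
    have "x + t *\<^sub>R (- u) \<in> P \<longleftrightarrow> - t \<in> {a..b}"
      using ab[THEN eqset_imp_iff, of "- t"] by simp
    then show "t \<in> {t. x + t *\<^sub>R (- u) \<in> P} \<longleftrightarrow> t \<in> {- b .. - a}"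
      by auto
  qed
  then have "exit_height P (- u) x = - (u \<bullet> x) - a"
    using \<open>a \<le> b\<close> by (simp add: exit_height_def)
  moreover have "exit_height P u x = u \<bullet> x + b"
    using ab \<open>a \<le> b\<close> by (simp add: exit_height_def)
  ultimately show "{t. x + t *\<^sub>R u \<in> P} = {- exit_height P (- u) x - u \<bullet> x .. exit_height P u x - u \<bullet> x}"
    and "- exit_height P (- u) x \<le> exit_height P u x"
    using ab \<open>a \<le> b\<close> by simp_all
qed

lemma integral_cis_line:
  fixes P :: "'a::euclidean_space set"
  assumes P: "compact P" "convex P" and u: "norm u = 1" and \<omega>: "\<omega> \<noteq> 0" and x: "x \<in> slab_shadow u P"
  shows "(\<integral>t. indicator P (x + t *\<^sub>R u) *\<^sub>R cis (- \<omega> * (u \<bullet> (x + t *\<^sub>R u))) \<partial>lborel)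
     = (\<i> / \<omega>) * (cis (- \<omega> * exit_height P u x) - cis (\<omega> * exit_height P (- u) x))"
proof -
  define lo where "lo = - exit_height P (- u) x - u \<bullet> x"
  define hi where "hi = exit_height P u x - u \<bullet> x"
  define F where "F t = (\<i> / \<omega>) * cis (- \<omega> * (u \<bullet> x + t))" for t
  have "(F has_derivative (\<lambda>h. h *\<^sub>R cis (- \<omega> * (u \<bullet> x + t)))) (at t within S)" for t S
    unfolding F_def using \<omega>
    by (auto intro!: derivative_eq_intros ext simp: scaleR_conv_of_real field_simps)
  then have deriv: "(F has_vector_derivative cis (- \<omega> * (u \<bullet> x + t))) (at t within S)" for t S
    by (simp add: has_vector_derivative_def)
  have "indicator P (x + t *\<^sub>R u) = (indicator {lo..hi} t :: real)" for t
    using line_params_interval(1)[OF P u x] by (simp add: indicator_def set_eq_iff lo_def hi_def)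
  then have "(\<integral>t. indicator P (x + t *\<^sub>R u) *\<^sub>R cis (- \<omega> * (u \<bullet> (x + t *\<^sub>R u))) \<partial>lborel)
      = (\<integral>t. indicator {lo..hi} t *\<^sub>R cis (- \<omega> * (u \<bullet> x + t)) \<partial>lborel)"
    using u by (simp add: inner_add_right norm_eq_1)
  also have "\<dots> = F hi - F lo"
    using line_params_interval(2)[OF P u x] deriv
    by (intro integral_FTC_atLeastAtMost) (auto simp: lo_def hi_def intro!: continuous_intros)
  finally show ?thesis
    by (simp add: F_def lo_def hi_def right_diff_distrib)
qed

section \<open>Exit heights for polytopes\<close>

lemma polyhedron_obtain_indexed_halfspaces:
  fixes P :: "'a::euclidean_space set"
  assumes "polyhedron P"
  obtains m :: nat and a b where "P = {z. \<forall>j<m. a j \<bullet> z \<le> b j}"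
proof -
  obtain F where F: "finite F" "P = \<Inter>F" "\<forall>h\<in>F. \<exists>a b. a \<noteq> 0 \<and> h = {x. a \<bullet> x \<le> b}"
    using assms by (auto simp: polyhedron_def)
  then have "\<forall>h\<in>F. \<exists>a b. \<forall>x. x \<in> h \<longleftrightarrow> a \<bullet> x \<le> b"
    by fastforce
  then obtain A B where AB: "\<And>h x. h \<in> F \<Longrightarrow> x \<in> h \<longleftrightarrow> A h \<bullet> x \<le> B h"
    by metis
  obtain f where f: "bij_betw f {0..<card F} F"
    using ex_bij_betw_nat_finite[OF F(1)] by blast
  have "z \<in> P \<longleftrightarrow> (\<forall>j<card F. A (f j) \<bullet> z \<le> B (f j))" for z
  proof -
    have "z \<in> P \<longleftrightarrow> (\<forall>h\<in>f ` {0..<card F}. z \<in> h)"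
      using F(2) f by (simp add: bij_betw_def)
    also have "\<dots> \<longleftrightarrow> (\<forall>j<card F. z \<in> f j)"
      by auto
    also have "\<dots> \<longleftrightarrow> (\<forall>j<card F. A (f j) \<bullet> z \<le> B (f j))"
      using AB bij_betwE[OF f] by simp
    finally show ?thesis .
  qed
  then show ?thesis
    by (intro that[of "card F" "A \<circ> f" "B \<circ> f"]) auto
qed

lemma halfspaces_line_mem:
  fixes a :: "nat \<Rightarrow> 'a::euclidean_space"
  assumes P: "P = {z. \<forall>j<m. a j \<bullet> z \<le> b j}" and h: "x + h *\<^sub>R u \<in> P" and "h \<le> t"
    and t: "\<And>j. j < m \<Longrightarrow> 0 < a j \<bullet> u \<Longrightarrow> t \<le> (b j - a j \<bullet> x) / (a j \<bullet> u)"
  shows "x + t *\<^sub>R u \<in> P"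
proof -
  have "a j \<bullet> (x + t *\<^sub>R u) \<le> b j" if j: "j < m" for j
  proof (cases "0 < a j \<bullet> u")
    case True
    then show ?thesis
      using t[OF j] by (simp add: pos_le_divide_eq inner_add_right algebra_simps)
  next
    case False
    then have "t * (a j \<bullet> u) \<le> h * (a j \<bullet> u)"
      using \<open>h \<le> t\<close> by (simp add: mult_right_mono_neg)
    moreover have "a j \<bullet> (x + h *\<^sub>R u) \<le> b j"
      using h j P by auto
    ultimately show ?thesis
      by (simp add: inner_add_right)
  qed
  then show ?thesis
    using P by auto
qed

lemma exit_height_halfspaces_Min:
  fixes a :: "nat \<Rightarrow> 'a::euclidean_space"
  assumes P: "P = {z. \<forall>j<m. a j \<bullet> z \<le> b j}" and bdd: "bounded P" and u: "norm u = 1"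
    and x: "x \<in> slab_shadow u P"
  defines "J \<equiv> {j. j < m \<and> 0 < a j \<bullet> u}"
  shows "J \<noteq> {}"
    and "exit_height P u x = (MIN j\<in>J. b j / (a j \<bullet> u) + (u - (1 / (a j \<bullet> u)) *\<^sub>R a j) \<bullet> x)"
proof -
  have "P = (\<Inter>j<m. {z. a j \<bullet> z \<le> b j})"
    using P by auto
  then have "compact P"
    using bdd by (simp add: compact_eq_bounded_closed closed_INT closed_halfspace_le)
  moreover obtain t0 where "x + t0 *\<^sub>R u \<in> P"
    using x by (auto simp: slab_shadow_def)
  ultimately have exit: "x + Sup {t. x + t *\<^sub>R u \<in> P} *\<^sub>R u \<in> P"
    and above: "\<And>t. x + t *\<^sub>R u \<in> P \<Longrightarrow> u \<bullet> (x + t *\<^sub>R u) \<le> exit_height P u x"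
    using exit_point[OF _ u] by blast+
  define h where "h = Sup {t. x + t *\<^sub>R u \<in> P}"
  define r where "r j = (b j - a j \<bullet> x) / (a j \<bullet> u)" for j
  have h_max: "t \<le> h" if "x + t *\<^sub>R u \<in> P" for t
    using above[OF that] u by (simp add: exit_height_def h_def inner_add_right norm_eq_1)
  have h_le: "h \<le> r j" if "j \<in> J" for j
    using exit that P by (auto simp: h_def r_def J_def pos_le_divide_eq inner_add_right algebra_simps)
  have feasible: "x + t *\<^sub>R u \<in> P" if "h \<le> t" "\<forall>j\<in>J. t \<le> r j" for t
    using halfspaces_line_mem[OF P exit[folded h_def] that(1)] that(2) by (simp add: J_def r_def)
  show J: "J \<noteq> {}"
    using feasible[of "h + 1"] h_max[of "h + 1"] by auto
  have "finite J"
    by (simp add: J_def)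
  then have "(MIN j\<in>J. r j) \<in> r ` J"
    using J by simp
  then obtain j0 where j0: "j0 \<in> J" "(MIN j\<in>J. r j) = r j0"
    by auto
  have "r j0 \<le> r j" if "j \<in> J" for j
    unfolding j0(2)[symmetric] using \<open>finite J\<close> that by (intro Min_le) auto
  then have "h = r j0"
    using h_le[OF j0(1)] h_max[OF feasible[of "r j0"]] by (simp add: antisym)
  have ell: "b j / (a j \<bullet> u) + (u - (1 / (a j \<bullet> u)) *\<^sub>R a j) \<bullet> x = u \<bullet> x + r j" for j
    by (simp add: r_def inner_diff_left diff_divide_distrib)
  show "exit_height P u x = (MIN j\<in>J. b j / (a j \<bullet> u) + (u - (1 / (a j \<bullet> u)) *\<^sub>R a j) \<bullet> x)"
    unfolding ell
  proof (rule Min_eqI[symmetric])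
    show "finite ((\<lambda>j. u \<bullet> x + r j) ` J)"
      using \<open>finite J\<close> by simp
    show "exit_height P u x \<le> y" if "y \<in> (\<lambda>j. u \<bullet> x + r j) ` J" for y
      using that h_le by (auto simp: exit_height_def h_def)
    show "exit_height P u x \<in> (\<lambda>j. u \<bullet> x + r j) ` J"
      using j0(1) \<open>h = r j0\<close> by (auto simp: exit_height_def h_def)
  qed
qed

lemma polytope_exit_height_Min_affine:
  fixes P :: "'a::euclidean_space set"
  assumes P: "polytope P" "P \<noteq> {}" and u: "norm u = 1"
  obtains J :: "nat set" and c :: "nat \<Rightarrow> real" and g :: "nat \<Rightarrow> 'a"
  where "finite J" "J \<noteq> {}" "\<And>x. x \<in> slab_shadow u P \<Longrightarrow> exit_height P u x = (MIN j\<in>J. c j + g j \<bullet> x)"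
proof -
  obtain m :: nat and a b where Pab: "P = {z. \<forall>j<m. a j \<bullet> z \<le> b j}"
    using polyhedron_obtain_indexed_halfspaces[OF polytope_imp_polyhedron[OF P(1)]] .
  have bdd: "bounded P"
    using P(1) by (simp add: polytope_imp_bounded)
  obtain p where "p \<in> P"
    using P(2) by auto
  have "u \<bullet> (p - (u \<bullet> p) *\<^sub>R u) = 0"
    using u by (simp add: inner_diff_right norm_eq_1)
  then have "p - (u \<bullet> p) *\<^sub>R u \<in> slab_shadow u P"
    using \<open>p \<in> P\<close> by (auto simp: slab_shadow_def slab_def intro!: exI[of _ "u \<bullet> p"])
  then have "{j. j < m \<and> 0 < a j \<bullet> u} \<noteq> {}"
    by (rule exit_height_halfspaces_Min(1)[OF Pab bdd u])
  then show ?thesis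
    using exit_height_halfspaces_Min(2)[OF Pab bdd u]
    by (intro that[of "{j. j < m \<and> 0 < a j \<bullet> u}" "\<lambda>j. b j / (a j \<bullet> u)" "\<lambda>j. u - (1 / (a j \<bullet> u)) *\<^sub>R a j"]) auto
qed

lemma integrable_exit_height:
  fixes P :: "'a::euclidean_space set"
  assumes P: "polytope P" and u: "norm u = 1"
  shows "integrable lborel (\<lambda>x. indicator (slab_shadow u P) x *\<^sub>R cis (- \<omega> * exit_height P u x))"
proof (cases "P = {}")
  case True
  then show ?thesis
    by (simp add: slab_shadow_def)
next
  case False
  obtain J :: "nat set" and c g where "finite J"
    and "\<And>x. x \<in> slab_shadow u P \<Longrightarrow> exit_height P u x = (MIN j\<in>J. c j + g j \<bullet> x)"
    using polytope_exit_height_Min_affine[OF P False u] by metis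
  moreover have "slab_shadow u P \<in> sets borel" "bounded (slab_shadow u P)"
    using P u by (simp_all add: borel_closed closed_slab_shadow bounded_slab_shadow
        polytope_imp_compact polytope_imp_bounded)
  ultimately show ?thesis
    by (intro integrable_indicator_cis_min_affine)
qed

lemma oscillatory_integral_exit_height:
  fixes P :: "'a::euclidean_space set"
  assumes P: "polytope P" and u: "norm u = 1" and zs: "zs \<in> P" "\<And>z. z \<in> P \<Longrightarrow> u \<bullet> z \<le> u \<bullet> zs"
  shows "\<exists>K. \<forall>\<omega>. \<omega> \<noteq> 0 \<longrightarrow>
    norm ((\<integral>x. indicator (slab_shadow u P) x *\<^sub>R cis (- \<omega> * exit_height P u x) \<partial>lborel)
      - measure lborel (slab_shadow u (P \<inter> {z. u \<bullet> z = u \<bullet> zs})) *\<^sub>R cis (- \<omega> * (u \<bullet> zs))) \<le> K / \<bar>\<omega>\<bar>"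
proof -
  define H where "H = slab_shadow u P"
  have cpt: "compact P"
    using P by (rule polytope_imp_compact)
  have uu: "u \<bullet> u = 1"
    using u by (simp add: norm_eq_1)
  obtain J :: "nat set" and c g where J: "finite J" "J \<noteq> {}"
    and Min: "\<And>x. x \<in> H \<Longrightarrow> exit_height P u x = (MIN j\<in>J. c j + g j \<bullet> x)"
    using polytope_exit_height_Min_affine[OF P _ u] zs(1) unfolding H_def by blast
  have H: "H \<in> sets borel" "convex H" "bounded H"
    using P u cpt by (simp_all add: H_def borel_closed closed_slab_shadow bounded_slab_shadow
        convex_slab_shadow polytope_imp_convex polytope_imp_bounded)
  have exit_in: "x + Sup {t. x + t *\<^sub>R u \<in> P} *\<^sub>R u \<in> P"
    and above: "\<And>t. x + t *\<^sub>R u \<in> P \<Longrightarrow> u \<bullet> (x + t *\<^sub>R u) \<le> exit_height P u x" if "x \<in> H" for x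
    using exit_point[OF cpt u] that by (auto simp: H_def slab_shadow_def)
  have exit_eq: "exit_height P u x = u \<bullet> (x + Sup {t. x + t *\<^sub>R u \<in> P} *\<^sub>R u)" for x
    using uu by (simp add: exit_height_def inner_add_right)
  have le: "exit_height P u x \<le> u \<bullet> zs" if "x \<in> H" for x
    using zs(2)[OF exit_in[OF that]] by (simp add: exit_eq)
  define x0 where "x0 = zs - (u \<bullet> zs) *\<^sub>R u"
  have x0_zs: "x0 + (u \<bullet> zs) *\<^sub>R u = zs"
    by (simp add: x0_def)
  moreover have "u \<bullet> x0 = 0"
    using uu by (simp add: x0_def inner_diff_right)
  ultimately have x0H: "x0 \<in> H"
    using zs(1) by (auto simp: H_def slab_shadow_def slab_def intro!: exI[of _ "u \<bullet> zs"])
  then have "exit_height P u x0 = u \<bullet> zs"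
    using le[OF x0H] above[OF x0H, of "u \<bullet> zs"] x0_zs zs(1) by simp
  note x0 = x0H this
  have "{x \<in> H. exit_height P u x = u \<bullet> zs} = slab_shadow u (P \<inter> {z. u \<bullet> z = u \<bullet> zs})"
  proof (intro set_eqI iffI)
    fix x assume "x \<in> {x \<in> H. exit_height P u x = u \<bullet> zs}"
    then show "x \<in> slab_shadow u (P \<inter> {z. u \<bullet> z = u \<bullet> zs})"
      using exit_in[of x] exit_eq[of x] by (auto simp: H_def slab_shadow_def)
  next
    fix x assume "x \<in> slab_shadow u (P \<inter> {z. u \<bullet> z = u \<bullet> zs})"
    then obtain t where "x \<in> slab u" "x + t *\<^sub>R u \<in> P" "u \<bullet> (x + t *\<^sub>R u) = u \<bullet> zs"
      by (auto simp: slab_shadow_def)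
    moreover from this have "x \<in> H"
      by (auto simp: H_def slab_shadow_def)
    ultimately show "x \<in> {x \<in> H. exit_height P u x = u \<bullet> zs}"
      using above[of x t] le[of x] by auto
  qed
  with oscillatory_integral_min_affine[OF H J Min le x0] show ?thesis
    by (simp add: H_def)
qed

lemma integral_cis_polytope:
  fixes P :: "'a::euclidean_space set"
  assumes P: "polytope P" and u: "norm u = 1" and \<omega>: "\<omega> \<noteq> 0"
  shows "(\<integral>z. indicator P z *\<^sub>R cis (- \<omega> * (u \<bullet> z)) \<partial>lborel)
     = (\<i> / \<omega>) * ((\<integral>x. indicator (slab_shadow u P) x *\<^sub>R cis (- \<omega> * exit_height P u x) \<partial>lborel)
                 - (\<integral>x. indicator (slab_shadow u P) x *\<^sub>R cis (\<omega> * exit_height P (- u) x) \<partial>lborel))"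
proof -
  have cpt: "compact P" and cvx: "convex P"
    using P by (simp_all add: polytope_imp_compact polytope_imp_convex)
  have "integrable lborel (\<lambda>z. indicator P z *\<^sub>R cis (- \<omega> * (u \<bullet> z)))"
    using cpt by (intro borel_integrable_compact continuous_intros)
  then have "(\<integral>z. indicator P z *\<^sub>R cis (- \<omega> * (u \<bullet> z)) \<partial>lborel)
      = (\<integral>x. indicator (slab u) x *\<^sub>R
           (\<integral>t. indicator P (x + t *\<^sub>R u) *\<^sub>R cis (- \<omega> * (u \<bullet> (x + t *\<^sub>R u))) \<partial>lborel) \<partial>lborel)"
    by (rule integral_lborel_slab_lines[OF _ u])
  also have "\<dots> = (\<integral>x. (\<i> / \<omega>) * (indicator (slab_shadow u P) x *\<^sub>R cis (- \<omega> * exit_height P u x)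
        - indicator (slab_shadow u P) x *\<^sub>R cis (\<omega> * exit_height P (- u) x)) \<partial>lborel)"
  proof (rule Bochner_Integration.integral_cong[OF refl])
    fix x
    show "indicator (slab u) x *\<^sub>R
        (\<integral>t. indicator P (x + t *\<^sub>R u) *\<^sub>R cis (- \<omega> * (u \<bullet> (x + t *\<^sub>R u))) \<partial>lborel)
      = (\<i> / \<omega>) * (indicator (slab_shadow u P) x *\<^sub>R cis (- \<omega> * exit_height P u x)
        - indicator (slab_shadow u P) x *\<^sub>R cis (\<omega> * exit_height P (- u) x))"
    proof (cases "x \<in> slab_shadow u P")
      case True
      then show ?thesis
        using integral_cis_line[OF cpt cvx u \<omega> True] by (simp add: slab_shadow_def)
    next
      case False
      then have zero: "indicator (slab u) x * indicator P (x + t *\<^sub>R u) = (0 :: real)" for t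
        by (auto simp: slab_shadow_def)
      show ?thesis
        using False by (simp add: zero flip: integral_scaleR_right)
    qed
  qed
  also have "\<dots> = (\<i> / \<omega>) * ((\<integral>x. indicator (slab_shadow u P) x *\<^sub>R cis (- \<omega> * exit_height P u x) \<partial>lborel)
                 - (\<integral>x. indicator (slab_shadow u P) x *\<^sub>R cis (\<omega> * exit_height P (- u) x) \<partial>lborel))"
    using integrable_exit_height[OF P u, of \<omega>] integrable_exit_height[OF P, of "- u" "- \<omega>"] u
    by simp
  finally show ?thesis .
qed

section \<open>Faces orthogonal to the direction\<close>

lemma integral_indicator_prism_line:
  fixes K :: "'a::euclidean_space set"
  assumes u: "norm u = 1" and K: "K \<subseteq> {z. u \<bullet> z = c}"
  shows "(\<integral>t. indicator {y + s *\<^sub>R u | y s. y \<in> K \<and> s \<in> {0..1}} (x + t *\<^sub>R u) \<partial>lborel)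
       = (if \<exists>t. x + t *\<^sub>R u \<in> K then 1 else 0 :: real)"
proof (cases "\<exists>t. x + t *\<^sub>R u \<in> K")
  case True
  then obtain t0 where t0: "x + t0 *\<^sub>R u \<in> K"
    by blast
  have uu: "u \<bullet> u = 1"
    using u by (simp add: norm_eq_1)
  have ct0: "u \<bullet> x + t0 = c"
    using K t0 uu by (auto simp: inner_add_right)
  have "x + t *\<^sub>R u \<in> {y + s *\<^sub>R u | y s. y \<in> K \<and> s \<in> {0..1}} \<longleftrightarrow> t \<in> {t0..t0 + 1}" for t
  proof
    assume "x + t *\<^sub>R u \<in> {y + s *\<^sub>R u | y s. y \<in> K \<and> s \<in> {0..1}}"
    then obtain y s where y: "y \<in> K" "s \<in> {0..1}" "x + t *\<^sub>R u = y + s *\<^sub>R u"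
      by blast
    have "u \<bullet> (x + t *\<^sub>R u) = u \<bullet> (y + s *\<^sub>R u)"
      using y(3) by simp
    then have "u \<bullet> x + t = c + s"
      using K y(1) uu by (auto simp: inner_add_right)
    then show "t \<in> {t0..t0 + 1}"
      using ct0 y(2) by auto
  next
    assume "t \<in> {t0..t0 + 1}"
    moreover have "x + t *\<^sub>R u = (x + t0 *\<^sub>R u) + (t - t0) *\<^sub>R u"
      by (simp add: algebra_simps)
    ultimately show "x + t *\<^sub>R u \<in> {y + s *\<^sub>R u | y s. y \<in> K \<and> s \<in> {0..1}}"
      using t0 by force
  qed
  then have "(\<integral>t. indicator {y + s *\<^sub>R u | y s. y \<in> K \<and> s \<in> {0..1}} (x + t *\<^sub>R u) \<partial>lborel)
      = (\<integral>t. (indicator {t0..t0 + 1} t :: real) \<partial>lborel)"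
    by (intro Bochner_Integration.integral_cong refl) (simp add: indicator_def)
  also have "\<dots> = 1"
    by simp
  finally show ?thesis
    using True by simp
next
  case False
  have "x + t *\<^sub>R u \<notin> {y + s *\<^sub>R u | y s. y \<in> K \<and> s \<in> {0..1}}" for t
  proof
    assume "x + t *\<^sub>R u \<in> {y + s *\<^sub>R u | y s. y \<in> K \<and> s \<in> {0..1}}"
    then obtain y s where "y \<in> K" "x + t *\<^sub>R u = y + s *\<^sub>R u"
      by blast
    then have "x + (t - s) *\<^sub>R u \<in> K"
      by (simp add: algebra_simps)
    then show False
      using False by blast
  qed
  then show ?thesis
    using False by simp
qed

text \<open>The unit prism over a flat set is swept out by the lines \<open>x + \<real>u\<close>, each meeting it
  in a segment of length one.\<close>

lemma measure_slab_shadow_flat: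
  fixes K :: "'a::euclidean_space set"
  assumes u: "norm u = 1" and K: "compact K" "K \<subseteq> {z. u \<bullet> z = c}"
  shows "measure lborel (slab_shadow u K) = facet_area u K"
proof -
  define Pr where "Pr = {y + s *\<^sub>R u | y s. y \<in> K \<and> s \<in> {0..1::real}}"
  have "Pr = (\<lambda>p. fst p + snd p *\<^sub>R u) ` (K \<times> {0..1})"
  proof (intro set_eqI iffI)
    fix v assume "v \<in> Pr"
    then obtain y s where "y \<in> K" "s \<in> {0..1}" "v = y + s *\<^sub>R u"
      by (auto simp: Pr_def)
    then show "v \<in> (\<lambda>p. fst p + snd p *\<^sub>R u) ` (K \<times> {0..1})"
      by (intro image_eqI[of _ _ "(y, s)"]) auto
  next
    fix v assume "v \<in> (\<lambda>p. fst p + snd p *\<^sub>R u) ` (K \<times> {0..1})"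
    then show "v \<in> Pr"
      by (force simp: Pr_def)
  qed
  then have "compact Pr"
    by (simp add: compact_continuous_image compact_Times K(1) continuous_intros)
  then have Pr: "Pr \<in> sets borel" "emeasure lborel Pr < \<infinity>"
    using borel_compact emeasure_compact_finite by blast+
  have "facet_area u K = measure lborel Pr"
    using Pr by (simp add: facet_area_def Pr_def)
  also have "\<dots> = (\<integral>z. indicator Pr z \<partial>lborel)"
    using Pr by simp
  also have "\<dots> = (\<integral>x. indicator (slab u) x *\<^sub>R (\<integral>t. indicator Pr (x + t *\<^sub>R u) \<partial>lborel) \<partial>lborel)"
    using Pr by (intro integral_lborel_slab_lines[OF _ u] integrable_real_indicator) auto
  also have "\<dots> = (\<integral>x. indicator (slab_shadow u K) x \<partial>lborel)"
    unfolding Pr_def integral_indicator_prism_line[OF u K(2)]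
    by (intro Bochner_Integration.integral_cong refl) (auto simp: slab_shadow_def indicator_def)
  also have "\<dots> = measure lborel (slab_shadow u K)"
    using K(1) by (simp add: borel_closed closed_slab_shadow)
  finally show ?thesis ..
qed

lemma facet_area_low_dim:
  fixes F :: "'a::euclidean_space set"
  assumes "aff_dim F + 1 < DIM('a)"
  shows "facet_area u F = 0"
proof (cases "F = {}")
  case True
  then show ?thesis
    by (simp add: facet_area_def)
next
  case False
  then obtain p where p: "p \<in> F"
    by auto
  define A where "A = affine hull (insert (p + u) F)"
  have "aff_dim A \<le> aff_dim F + 1"
    by (simp add: A_def aff_dim_insert)
  then have "interior A = {}"
    using assms aff_dim_nonempty_interior[of A] by fastforce
  then have "negligible A"
    using negligible_convex_interior[of A] by (simp add: A_def affine_imp_convex)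
  moreover have "{x + t *\<^sub>R u | x t. x \<in> F \<and> t \<in> {0..1::real}} \<subseteq> A"
  proof clarify
    fix x and t :: real
    assume "x \<in> F"
    then have "x \<in> A" "p + u \<in> A" "p \<in> A"
      using p by (auto simp: A_def hull_inc)
    then show "x + t *\<^sub>R u \<in> A"
      using mem_affine_3_minus[of A x "p + u" p t] by (simp add: A_def)
  qed
  ultimately show ?thesis
    by (simp add: facet_area_def negligible_imp_measure0 negligible_subset)
qed

lemma hyperplane_subset_hyperplane:
  fixes s a :: "'a::euclidean_space"
  assumes s: "s \<noteq> 0" and sub: "{z. s \<bullet> z = c} \<subseteq> {z. a \<bullet> z = b}"
  shows "a = ((a \<bullet> s) / (s \<bullet> s)) *\<^sub>R s \<and> b = ((a \<bullet> s) / (s \<bullet> s)) * c"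
proof -
  define \<kappa> where "\<kappa> = (a \<bullet> s) / (s \<bullet> s)"
  define p where "p = (c / (s \<bullet> s)) *\<^sub>R s"
  define a' where "a' = a - \<kappa> *\<^sub>R s"
  have ss: "s \<bullet> s \<noteq> 0"
    using s by simp
  have "s \<bullet> p = c" "s \<bullet> a' = 0"
    using ss by (simp_all add: p_def a'_def \<kappa>_def inner_diff_right inner_commute)
  then have "p \<in> {z. s \<bullet> z = c}" "p + a' \<in> {z. s \<bullet> z = c}"
    by (simp_all add: inner_add_right)
  then have "a \<bullet> p = b" "a \<bullet> (p + a') = b"
    using sub by blast+
  then have "a \<bullet> a' = 0"
    by (simp add: inner_add_right)
  then have "a' \<bullet> a' = 0"
    using \<open>s \<bullet> a' = 0\<close> by (simp add: a'_def inner_diff_left)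
  then have "a = \<kappa> *\<^sub>R s"
    by (simp add: a'_def)
  moreover have "b = \<kappa> * c"
    using \<open>a \<bullet> p = b\<close> \<open>s \<bullet> p = c\<close> by (simp add: \<open>a = \<kappa> *\<^sub>R s\<close>)
  ultimately show ?thesis
    by (simp add: \<kappa>_def)
qed

text \<open>A facet orthogonal to \<open>s\<close> spans the hyperplane \<open>s \<bullet> z = c\<close> through it, which therefore
  is the supporting hyperplane cutting it out.\<close>

lemma facet_orth_to_supporting:
  fixes P F :: "'a::euclidean_space set"
  assumes P: "polyhedron P" "aff_dim P = DIM('a)" and F: "F facet_of P" "orth_to s F" and s: "s \<noteq> 0"
  shows "\<exists>c. F = P \<inter> {z. s \<bullet> z = c} \<and> ((\<forall>z\<in>P. s \<bullet> z \<le> c) \<or> (\<forall>z\<in>P. c \<le> s \<bullet> z))"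
proof -
  obtain a b where a: "a \<noteq> 0" and Pa: "P \<subseteq> {x. a \<bullet> x \<le> b}" and Fa: "F = P \<inter> {x. a \<bullet> x = b}"
    using facet_of_polyhedron[OF P(1) F(1)] by blast
  obtain p where p: "p \<in> F" and dimF: "aff_dim F = aff_dim P - 1"
    using F(1) by (auto simp: facet_of_def)
  define c where "c = s \<bullet> p"
  have "s \<bullet> x = c" if "x \<in> F" for x
  proof -
    have "s \<bullet> (x - p) = 0"
      using F(2) that p by (simp add: orth_to_def)
    then show ?thesis
      by (simp add: c_def inner_diff_right)
  qed
  then have "affine hull F \<subseteq> {z. s \<bullet> z = c}"
    by (intro hull_minimal) (auto simp: affine_hyperplane)
  then have "affine hull F = {z. s \<bullet> z = c}"
    using p dimF P(2) s by (intro affine_dim_equal) (auto simp: affine_hyperplane)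
  moreover have "affine hull F \<subseteq> {x. a \<bullet> x = b}"
    using Fa by (intro hull_minimal) (auto simp: affine_hyperplane)
  ultimately have "{z. s \<bullet> z = c} \<subseteq> {x. a \<bullet> x = b}"
    by simp
  define \<kappa> where "\<kappa> = (a \<bullet> s) / (s \<bullet> s)"
  have \<kappa>: "a = \<kappa> *\<^sub>R s" "b = \<kappa> * c"
    using hyperplane_subset_hyperplane[OF s \<open>{z. s \<bullet> z = c} \<subseteq> {x. a \<bullet> x = b}\<close>] by (simp_all add: \<kappa>_def)
  then have "\<kappa> \<noteq> 0"
    using a by auto
  then have "a \<bullet> z = b \<longleftrightarrow> s \<bullet> z = c" for z
    by (simp add: \<kappa>)
  then have "F = P \<inter> {z. s \<bullet> z = c}"
    using Fa by auto
  moreover have "(\<forall>z\<in>P. s \<bullet> z \<le> c) \<or> (\<forall>z\<in>P. c \<le> s \<bullet> z)"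
  proof (cases "\<kappa> > 0")
    case True
    have "s \<bullet> z \<le> c" if "z \<in> P" for z
      using Pa that True by (auto simp: \<kappa>)
    then show ?thesis
      by blast
  next
    case False
    then have "\<kappa> < 0"
      using \<open>\<kappa> \<noteq> 0\<close> by simp
    have "c \<le> s \<bullet> z" if "z \<in> P" for z
      using Pa that \<open>\<kappa> < 0\<close> by (auto simp: \<kappa>)
    then show ?thesis
      by blast
  qed
  ultimately show ?thesis
    by blast
qed

lemma facet_area_face_not_facet:
  fixes P F :: "'a::euclidean_space set"
  assumes P: "convex P" "aff_dim P = DIM('a)" and F: "F face_of P" "F \<noteq> P" "\<not> F facet_of P"
  shows "facet_area u F = 0"
proof (rule facet_area_low_dim)
  have "aff_dim F < aff_dim P"
    by (rule face_of_aff_dim_lt[OF P(1) F(1,2)])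
  moreover have "F = {} \<or> aff_dim F \<noteq> aff_dim P - 1"
    using F by (auto simp: facet_of_def)
  ultimately show "aff_dim F + 1 < DIM('a)"
    using P(2) by auto
qed

lemma facet_orth_to_top_or_bottom:
  fixes P F :: "'a::euclidean_space set"
  assumes P: "polyhedron P" "aff_dim P = DIM('a)" and F: "F facet_of P" "orth_to s F" and s: "s \<noteq> 0"
    and zs: "\<And>z. z \<in> P \<Longrightarrow> s \<bullet> z \<le> s \<bullet> zs" "zs \<in> P"
    and zb: "\<And>z. z \<in> P \<Longrightarrow> s \<bullet> zb \<le> s \<bullet> z" "zb \<in> P"
  shows "F = P \<inter> {z. s \<bullet> z = s \<bullet> zs} \<or> F = P \<inter> {z. s \<bullet> z = s \<bullet> zb}"
proof -
  obtain c where c: "F = P \<inter> {z. s \<bullet> z = c}" and side: "(\<forall>z\<in>P. s \<bullet> z \<le> c) \<or> (\<forall>z\<in>P. c \<le> s \<bullet> z)"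
    using facet_orth_to_supporting[OF P F s] by blast
  obtain q where "q \<in> P" "s \<bullet> q = c"
    using F(1) c by (auto simp: facet_of_def)
  then have "c = s \<bullet> zs \<or> c = s \<bullet> zb"
    using side zs zb by (meson order.antisym)
  then show ?thesis
    by (auto simp: c)
qed

lemma sum_orth_facets:
  fixes P :: "'a::euclidean_space set" and h :: "real \<Rightarrow> 'b::real_algebra_1"
  assumes P: "polytope P" "aff_dim P = DIM('a)" and s: "s \<noteq> 0"
    and zs: "zs \<in> P" "\<And>z. z \<in> P \<Longrightarrow> s \<bullet> z \<le> s \<bullet> zs"
    and zb: "zb \<in> P" "\<And>z. z \<in> P \<Longrightarrow> s \<bullet> zb \<le> s \<bullet> z"
  shows "(\<Sum>F\<in>{F. F facet_of P \<and> orth_to s F}. of_real (facet_sgn P F s * facet_area v F) * h (s \<bullet> facet_point F))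
       = of_real (facet_area v (P \<inter> {z. s \<bullet> z = s \<bullet> zs})) * h (s \<bullet> zs)
       - of_real (facet_area v (P \<inter> {z. s \<bullet> z = s \<bullet> zb})) * h (s \<bullet> zb)"
proof -
  define T where "T = P \<inter> {z. s \<bullet> z = s \<bullet> zs}"
  define B where "B = P \<inter> {z. s \<bullet> z = s \<bullet> zb}"
  have cvx: "convex P"
    using P(1) by (rule polytope_imp_convex)
  have lt: "s \<bullet> zb < s \<bullet> zs"
  proof (rule ccontr)
    assume "\<not> s \<bullet> zb < s \<bullet> zs"
    then have "s \<bullet> z = s \<bullet> zs" if "z \<in> P" for z
      using zs(2)[OF that] zb(2)[OF that] by linarith
    then have "P \<subseteq> {z. s \<bullet> z = s \<bullet> zs}"
      by blast
    then have "aff_dim P \<le> aff_dim {z. s \<bullet> z = s \<bullet> zs}"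
      by (rule aff_dim_subset)
    then show False
      using P(2) s by simp
  qed
  have TB: "zs \<in> T" "zb \<in> B" "zb \<notin> T" "zs \<notin> B"
    using zs zb lt by (auto simp: T_def B_def)
  have "T face_of P"
    unfolding T_def using zs by (intro face_of_Int_supporting_hyperplane_le cvx) auto
  moreover have "B face_of P"
    unfolding B_def using zb by (intro face_of_Int_supporting_hyperplane_ge cvx) auto
  moreover have "T \<noteq> P" "B \<noteq> P"
    using TB zs(1) zb(1) by auto
  ultimately have area0: "facet_area v F = 0" if "F \<in> {T, B}" "\<not> F facet_of P" for F
    using that facet_area_face_not_facet[OF cvx P(2), of F v] by auto
  have "facet_point T \<in> T" "facet_point B \<in> B"
    using TB unfolding facet_point_def by (meson someI)+
  then have fp: "s \<bullet> facet_point T = s \<bullet> zs" "s \<bullet> facet_point B = s \<bullet> zb"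
    by (simp_all add: T_def B_def)
  moreover have "\<not> (\<forall>x\<in>P. s \<bullet> x \<le> s \<bullet> zb)"
    using zs(1) lt by force
  ultimately have sgn: "facet_sgn P T s = 1" "facet_sgn P B s = -1"
    using zs(2) by (simp_all add: facet_sgn_def)
  have "(\<Sum>F\<in>{F. F facet_of P \<and> orth_to s F}. of_real (facet_sgn P F s * facet_area v F) * h (s \<bullet> facet_point F))
      = (\<Sum>F\<in>{T, B}. of_real (facet_sgn P F s * facet_area v F) * h (s \<bullet> facet_point F))"
  proof (rule sum.mono_neutral_left)
    show "{F. F facet_of P \<and> orth_to s F} \<subseteq> {T, B}"
      using facet_orth_to_top_or_bottom[OF polytope_imp_polyhedron[OF P(1)] P(2) _ _ s zs(2,1) zb(2,1)]
      by (auto simp: T_def B_def)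
    have "orth_to s T" "orth_to s B"
      by (auto simp: orth_to_def T_def B_def inner_diff_right)
    then have "facet_area v F = 0" if "F \<in> {T, B} - {F. F facet_of P \<and> orth_to s F}" for F
      using that area0 by blast
    then show "\<forall>F\<in>{T, B} - {F. F facet_of P \<and> orth_to s F}.
        of_real (facet_sgn P F s * facet_area v F) * h (s \<bullet> facet_point F) = 0"
      by simp
  qed simp
  also have "\<dots> = of_real (facet_area v T) * h (s \<bullet> zs) - of_real (facet_area v B) * h (s \<bullet> zb)"
    using TB sgn fp by (cases "T = B") simp_all
  finally show ?thesis
    by (simp only: T_def B_def)
qed

section \<open>The asymptotic expansion\<close>

lemma integral_cis_polytope_asymptotic:
  fixes P :: "'a::euclidean_space set"
  assumes P: "polytope P" and u: "norm u = 1"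
    and zs: "zs \<in> P" "\<And>z. z \<in> P \<Longrightarrow> u \<bullet> z \<le> u \<bullet> zs"
    and zb: "zb \<in> P" "\<And>z. z \<in> P \<Longrightarrow> u \<bullet> zb \<le> u \<bullet> z"
  shows "\<exists>K. \<forall>\<omega>>0. norm ((\<integral>z. indicator P z *\<^sub>R cis (- \<omega> * (u \<bullet> z)) \<partial>lborel)
      - (\<i> / \<omega>) * (of_real (facet_area u (P \<inter> {z. u \<bullet> z = u \<bullet> zs})) * cis (- \<omega> * (u \<bullet> zs))
                  - of_real (facet_area u (P \<inter> {z. u \<bullet> z = u \<bullet> zb})) * cis (- \<omega> * (u \<bullet> zb)))) \<le> K / \<omega>\<^sup>2"
proof -
  have cpt: "compact P"
    using P by (rule polytope_imp_compact)
  have area: "measure lborel (slab_shadow u (P \<inter> {z. u \<bullet> z = c})) = facet_area u (P \<inter> {z. u \<bullet> z = c})" for c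
    using cpt by (intro measure_slab_shadow_flat[OF u, where c = c]) (auto simp: compact_Int_closed closed_hyperplane)
  obtain K1 where K1: "\<And>\<omega>. \<omega> \<noteq> 0 \<Longrightarrow>
      norm ((\<integral>x. indicator (slab_shadow u P) x *\<^sub>R cis (- \<omega> * exit_height P u x) \<partial>lborel)
        - facet_area u (P \<inter> {z. u \<bullet> z = u \<bullet> zs}) *\<^sub>R cis (- \<omega> * (u \<bullet> zs))) \<le> K1 / \<bar>\<omega>\<bar>"
    using oscillatory_integral_exit_height[OF P u zs] unfolding area by blast
  have "\<exists>K. \<forall>\<omega>. \<omega> \<noteq> 0 \<longrightarrow>
      norm ((\<integral>x. indicator (slab_shadow u P) x *\<^sub>R cis (- \<omega> * exit_height P (- u) x) \<partial>lborel)
        - facet_area u (P \<inter> {z. u \<bullet> z = u \<bullet> zb}) *\<^sub>R cis (\<omega> * (u \<bullet> zb))) \<le> K / \<bar>\<omega>\<bar>"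
    using oscillatory_integral_exit_height[OF P _ zb(1), of "- u"] zb(2) u by (simp add: area)
  then obtain K2 where K2': "\<And>\<omega>. \<omega> \<noteq> 0 \<Longrightarrow>
      norm ((\<integral>x. indicator (slab_shadow u P) x *\<^sub>R cis (- \<omega> * exit_height P (- u) x) \<partial>lborel)
        - facet_area u (P \<inter> {z. u \<bullet> z = u \<bullet> zb}) *\<^sub>R cis (\<omega> * (u \<bullet> zb))) \<le> K2 / \<bar>\<omega>\<bar>"
    by blast
  have K2: "norm ((\<integral>x. indicator (slab_shadow u P) x *\<^sub>R cis (\<omega> * exit_height P (- u) x) \<partial>lborel)
        - facet_area u (P \<inter> {z. u \<bullet> z = u \<bullet> zb}) *\<^sub>R cis (- \<omega> * (u \<bullet> zb))) \<le> K2 / \<bar>\<omega>\<bar>"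
    if "\<omega> \<noteq> 0" for \<omega>
    using K2'[of "- \<omega>"] that by simp
  show ?thesis
  proof (intro exI[of _ "K1 + K2"] allI impI)
    fix \<omega> :: real
    assume \<omega>: "\<omega> > 0"
    define e1 where "e1 = (\<integral>x. indicator (slab_shadow u P) x *\<^sub>R cis (- \<omega> * exit_height P u x) \<partial>lborel)
        - facet_area u (P \<inter> {z. u \<bullet> z = u \<bullet> zs}) *\<^sub>R cis (- \<omega> * (u \<bullet> zs))"
    define e2 where "e2 = (\<integral>x. indicator (slab_shadow u P) x *\<^sub>R cis (\<omega> * exit_height P (- u) x) \<partial>lborel)
        - facet_area u (P \<inter> {z. u \<bullet> z = u \<bullet> zb}) *\<^sub>R cis (- \<omega> * (u \<bullet> zb))"
    have "norm ((\<integral>z. indicator P z *\<^sub>R cis (- \<omega> * (u \<bullet> z)) \<partial>lborel)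
      - (\<i> / \<omega>) * (of_real (facet_area u (P \<inter> {z. u \<bullet> z = u \<bullet> zs})) * cis (- \<omega> * (u \<bullet> zs))
                  - of_real (facet_area u (P \<inter> {z. u \<bullet> z = u \<bullet> zb})) * cis (- \<omega> * (u \<bullet> zb))))
        = norm ((\<i> / \<omega>) * (e1 - e2))"
      unfolding integral_cis_polytope[OF P u less_imp_neq[OF \<omega>, symmetric]] e1_def e2_def
      by (simp add: scaleR_conv_of_real algebra_simps)
    also have "\<dots> = norm (e1 - e2) / \<omega>"
      using \<omega> by (simp add: norm_mult norm_divide)
    also have "\<dots> \<le> (K1 / \<omega> + K2 / \<omega>) / \<omega>"
      using K1[of \<omega>] K2[of \<omega>] \<omega> norm_triangle_ineq4[of e1 e2]
      by (intro divide_right_mono) (simp_all add: e1_def e2_def)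
    also have "\<dots> = (K1 + K2) / \<omega>\<^sup>2"
      by (simp add: power2_eq_square add_divide_distrib)
    finally show "norm ((\<integral>z. indicator P z *\<^sub>R cis (- \<omega> * (u \<bullet> z)) \<partial>lborel)
      - (\<i> / \<omega>) * (of_real (facet_area u (P \<inter> {z. u \<bullet> z = u \<bullet> zs})) * cis (- \<omega> * (u \<bullet> zs))
                  - of_real (facet_area u (P \<inter> {z. u \<bullet> z = u \<bullet> zb})) * cis (- \<omega> * (u \<bullet> zb)))) \<le> (K1 + K2) / \<omega>\<^sup>2" .
  qed
qed

lemma phi_eq_integral_cis:
  fixes P :: "'a::euclidean_space set"
  assumes "compact P"
  shows "phi P s l = (\<integral>z. indicator P z *\<^sub>R cis (- (1 / l) * (s \<bullet> z)) \<partial>lborel)"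
proof -
  have "set_integrable lborel P (\<lambda>z. cis (- (1 / l) * (s \<bullet> z)))"
    unfolding set_integrable_def using assms by (intro borel_integrable_compact continuous_intros)
  then have "(LINT z : P | lborel. cis (- (1 / l) * (s \<bullet> z))) = integral P (\<lambda>z. cis (- (1 / l) * (s \<bullet> z)))"
    by (rule set_borel_integral_eq_integral(2))
  moreover have "exp (- \<i> * complex_of_real ((1 / l) * (s \<bullet> z))) = cis (- (1 / l) * (s \<bullet> z))" for z
    by (simp add: cis_conv_exp)
  ultimately show ?thesis
    by (simp add: phi_def set_lebesgue_integral_def)
qed

lemma phi_asymptotic_extremes:
  fixes P :: "'a::euclidean_space set"
  assumes P: "polytope P" and s: "s \<noteq> 0"
    and zs: "zs \<in> P" "\<And>z. z \<in> P \<Longrightarrow> s \<bullet> z \<le> s \<bullet> zs"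
    and zb: "zb \<in> P" "\<And>z. z \<in> P \<Longrightarrow> s \<bullet> zb \<le> s \<bullet> z"
  shows "\<exists>K. \<forall>l>0. norm (phi P s l - (\<i> / norm s) *
      (of_real (facet_area (s /\<^sub>R norm s) (P \<inter> {z. s \<bullet> z = s \<bullet> zs})) * exp (- \<i> * of_real ((1 / l) * (s \<bullet> zs)))
     - of_real (facet_area (s /\<^sub>R norm s) (P \<inter> {z. s \<bullet> z = s \<bullet> zb})) * exp (- \<i> * of_real ((1 / l) * (s \<bullet> zb))))
      * of_real l) \<le> K * l\<^sup>2"
proof -
  define u where "u = s /\<^sub>R norm s"
  have ns: "norm s > 0"
    using s by simp
  then have u: "norm u = 1" and su: "\<And>z. s \<bullet> z = norm s * (u \<bullet> z)"
    by (simp_all add: u_def)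
  have "u \<bullet> z \<le> u \<bullet> zs" "u \<bullet> zb \<le> u \<bullet> z" if "z \<in> P" for z
    using zs(2)[OF that] zb(2)[OF that] ns by (simp_all add: su)
  moreover have "P \<inter> {z. u \<bullet> z = u \<bullet> w} = P \<inter> {z. s \<bullet> z = s \<bullet> w}" for w
    using ns by (auto simp: su)
  ultimately obtain K where K: "\<And>\<omega>. \<omega> > 0 \<Longrightarrow> norm ((\<integral>z. indicator P z *\<^sub>R cis (- \<omega> * (u \<bullet> z)) \<partial>lborel)
      - (\<i> / \<omega>) * (of_real (facet_area u (P \<inter> {z. s \<bullet> z = s \<bullet> zs})) * cis (- \<omega> * (u \<bullet> zs))
                  - of_real (facet_area u (P \<inter> {z. s \<bullet> z = s \<bullet> zb})) * cis (- \<omega> * (u \<bullet> zb)))) \<le> K / \<omega>\<^sup>2"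
    using integral_cis_polytope_asymptotic[OF P u zs(1) _ zb(1)] by auto
  have "norm (phi P s l - (\<i> / norm s) *
      (of_real (facet_area u (P \<inter> {z. s \<bullet> z = s \<bullet> zs})) * exp (- \<i> * of_real ((1 / l) * (s \<bullet> zs)))
     - of_real (facet_area u (P \<inter> {z. s \<bullet> z = s \<bullet> zb})) * exp (- \<i> * of_real ((1 / l) * (s \<bullet> zb))))
      * of_real l) \<le> K / (norm s)\<^sup>2 * l\<^sup>2" if l: "l > 0" for l
  proof -
    define \<omega> where "\<omega> = norm s / l"
    have wave: "exp (- \<i> * complex_of_real ((1 / l) * (s \<bullet> w))) = cis (- \<omega> * (u \<bullet> w))" for w
      by (simp add: cis_conv_exp su \<omega>_def)
    have phi: "phi P s l = (\<integral>z. indicator P z *\<^sub>R cis (- \<omega> * (u \<bullet> z)) \<partial>lborel)"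
      by (simp add: phi_eq_integral_cis[OF polytope_imp_compact[OF P]] su \<omega>_def)
    have scale: "(\<i> / complex_of_real (norm s)) * z * complex_of_real l = (\<i> / \<omega>) * z" for z
      using l by (simp add: \<omega>_def)
    have bound: "K / \<omega>\<^sup>2 = K / (norm s)\<^sup>2 * l\<^sup>2"
      using l by (simp add: \<omega>_def power_divide)
    have "\<omega> > 0"
      using l ns by (simp add: \<omega>_def)
    then show ?thesis
      unfolding phi wave scale bound[symmetric] by (rule K)
  qed
  then show ?thesis
    unfolding u_def by blast
qed

lemma phi_facet_expansion_bound:
  fixes P :: "'a::euclidean_space set"
  assumes P: "polytope P" "aff_dim P = DIM('a)" and s: "s \<noteq> 0"
  shows "\<exists>K. \<forall>l>0. norm (phi P s l - (\<i> / norm s) *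
      (\<Sum>F\<in>{F. F facet_of P \<and> orth_to s F}.
          of_real (facet_sgn P F s * facet_area (s /\<^sub>R norm s) F) * exp (- \<i> * of_real ((1 / l) * (s \<bullet> facet_point F))))
      * of_real l) \<le> K * l\<^sup>2"
proof -
  have cpt: "compact P" and ne: "P \<noteq> {}"
    using P by (auto simp: polytope_imp_compact)
  have cont: "continuous_on P (\<lambda>z. s \<bullet> z)"
    by (intro continuous_intros)
  obtain zs where zs: "zs \<in> P" "\<And>z. z \<in> P \<Longrightarrow> s \<bullet> z \<le> s \<bullet> zs"
    using continuous_attains_sup[OF cpt ne cont] by blast
  obtain zb where zb: "zb \<in> P" "\<And>z. z \<in> P \<Longrightarrow> s \<bullet> zb \<le> s \<bullet> z"
    using continuous_attains_inf[OF cpt ne cont] by blast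
  show ?thesis
    using phi_asymptotic_extremes[OF P(1) s zs zb]
      sum_orth_facets[OF P s zs zb, of "s /\<^sub>R norm s" "\<lambda>y. exp (- \<i> * of_real ((1 / _) * y))"]
    by simp
qed

theorem theorem1:
  fixes P :: "'a::euclidean_space set" and s :: 'a
  assumes "polytope P" and "aff_dim P = int DIM('a)" and "s \<noteq> 0"
  shows "(\<lambda>l. phi P s l
            - (\<i> / complex_of_real (norm s)) *
              (\<Sum>F\<in>{F. F facet_of P \<and> orth_to s F}.
                  complex_of_real (facet_sgn P F s * facet_area (s /\<^sub>R norm s) F)
                  * exp (- \<i> * complex_of_real ((1 / l) * (s \<bullet> facet_point F))))
              * complex_of_real l)
         \<in> O[at_right (0::real)](\<lambda>l. complex_of_real (l\<^sup>2))"
proof -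
  obtain K where K: "\<forall>l>0. norm (phi P s l - (\<i> / norm s) *
      (\<Sum>F\<in>{F. F facet_of P \<and> orth_to s F}.
          of_real (facet_sgn P F s * facet_area (s /\<^sub>R norm s) F) * exp (- \<i> * of_real ((1 / l) * (s \<bullet> facet_point F))))
      * of_real l) \<le> K * l\<^sup>2"
    using phi_facet_expansion_bound[OF assms] by blast
  show ?thesis
    using K by (intro bigoI[where c = K] eventually_at_rightI[of 0 1]) (auto simp: norm_power)
qed

end
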